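(* Assume $\theta_n>0$ for all $n$, that there are constants $c_j$ with $\sum_{j\ge1}\frac{c_j}{j}<\infty$ such that $\frac{\theta_{n-j}\theta_j}{\theta_n}<c_j$ for all $n$ and all $1\le j\le\frac n2$, and that $\frac{\theta_{n+1}}{\theta_n}\to1$ as $n\to\infty$. Then $\sum_{j\ge0}h_j<\infty$, and for every fixed integer $m\ge0$, \[ \lim_{n\to\infty}\mathbb{P}_n(L_1=n-m)=\frac{h_m}{\sum_{j\ge0}h_j}. \] Moreover, $R_1,R_2,R_3,\dots$ converge weakly to independent Poisson random variables with respective means $\theta_1,\frac{\theta_2}2,\frac{\theta_3}3,\dots$, and $K-1$ converges in distribution to a Poisson random variable with mean $\sum_{j\ge1}\frac{\theta_j}j$.
   Context: For $\sigma\in\mathcal{S}_n$ (permutations of $\{1,\dots,n\}$), $R_j(\sigma)$ is the number of cycles of length $j$, $L_1(\sigma)$ the length of the cycle containing $1$, $K(\sigma)=\sum_jR_j(\sigma)$. Given parameters $\theta_j\ge0$, $h_0=1$, $h_n=\frac1{n!}\sum_{\sigma\in\mathcal{S}_n}\prod_j\theta_j^{R_j(\sigma)}$, and $\mathbb{P}_n(\sigma)=\frac1{n!h_n}\prod_j\theta_j^{R_j(\sigma)}$. *)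

theory Defs
  imports "HOL-Analysis.Analysis" "HOL-Combinatorics.Combinatorics"
begin

definition perms :: "nat \<Rightarrow> (nat \<Rightarrow> nat) set" where
  "perms n = {\<sigma>. \<sigma> permutes {1..n}}"

definition cycles_of :: "nat \<Rightarrow> (nat \<Rightarrow> nat) \<Rightarrow> nat set set" where
  "cycles_of n \<sigma> = {orbit \<sigma> x | x. x \<in> {1..n}}"

definition Rcyc :: "nat \<Rightarrow> nat \<Rightarrow> (nat \<Rightarrow> nat) \<Rightarrow> nat" where
  "Rcyc n j \<sigma> = card {C \<in> cycles_of n \<sigma>. card C = j}"

definition L1 :: "(nat \<Rightarrow> nat) \<Rightarrow> nat" where
  "L1 \<sigma> = card (orbit \<sigma> 1)"

definition Kcyc :: "nat \<Rightarrow> (nat \<Rightarrow> nat) \<Rightarrow> nat" where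
  "Kcyc n \<sigma> = card (cycles_of n \<sigma>)"

definition wt :: "(nat \<Rightarrow> real) \<Rightarrow> nat \<Rightarrow> (nat \<Rightarrow> nat) \<Rightarrow> real" where
  "wt \<theta> n \<sigma> = (\<Prod>j\<in>{1..n}. \<theta> j ^ Rcyc n j \<sigma>)"

definition hseq :: "(nat \<Rightarrow> real) \<Rightarrow> nat \<Rightarrow> real" where
  "hseq \<theta> n = (1 / fact n) * (\<Sum>\<sigma>\<in>perms n. wt \<theta> n \<sigma>)"

definition Pn :: "(nat \<Rightarrow> real) \<Rightarrow> nat \<Rightarrow> ((nat \<Rightarrow> nat) \<Rightarrow> bool) \<Rightarrow> real" where
  "Pn \<theta> n E = (\<Sum>\<sigma>\<in>{\<sigma>\<in>perms n. E \<sigma>}. wt \<theta> n \<sigma>) / (fact n * hseq \<theta> n)"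

definition poisson :: "real \<Rightarrow> nat \<Rightarrow> real" where
  "poisson \<mu> k = \<mu> ^ k / fact k * exp (- \<mu>)"

end

theory Submission
  imports Defs "HOL-Computational_Algebra.Formal_Power_Series"
begin

text \<open>Put a_j = \<theta>_j / j and A(z) = \<Sum>_j a_j z^j. Cutting out the cycle through one point gives
  n h_n = \<Sum>_l \<theta>_l h_{n-l}, so h_n = [z^n] exp A(z); in the same way
  P_n(L_1 = n - m) = \<theta>_{n-m} h_m / (n h_n), P_n(K = m) = [z^n] A(z)^m / (m! h_n), and prescribing
  R_1, ..., R_k splits off the factor \<Prod>_{j \<le> k} a_j^{r_j} / r_j! times a coefficient of the
  exponential of the tail \<Sum>_{j > k} a_j z^j. The hypotheses make (a_n) subexponential:
  a_j a_{n-j} / a_n \<le> 2 c_j / j for j \<le> n/2, and a_{n-s} / a_n \<rightarrow> 1. For such a sequence,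
  dominated convergence gives [z^n] B(z)^m / a_n \<rightarrow> m B(1)^{m-1} and [z^n] exp B(z) / a_n \<rightarrow> exp B(1)
  whenever the coefficients of B are O(a_n) and asymptotic to a_n. In particular
  h_n ~ exp A(1) a_n, and each limit law follows by taking quotients.\<close>

section \<open>Cyclic permutations and the cycle decomposition\<close>

lemma transpose_comp_apply:
  assumes p: "p permutes T" and x: "x \<notin> T"
  shows "(Transposition.transpose x b \<circ> p) x = b"
    and "y \<in> T \<Longrightarrow> (Transposition.transpose x b \<circ> p) y = (if p y = b then x else p y)"
proof -
  show "(Transposition.transpose x b \<circ> p) x = b" using p x by (simp add: permutes_not_in)
  assume "y \<in> T"
  then have "p y \<noteq> x" using p x by (auto simp: permutes_in_image)
  then show "(Transposition.transpose x b \<circ> p) y = (if p y = b then x else p y)"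
    by (auto simp: transpose_def)
qed

lemma orbit_transpose_comp_subset:
  assumes p: "p permutes T" and fin: "finite T" and x: "x \<notin> T" and b: "b \<in> T"
  shows "orbit (Transposition.transpose x b \<circ> p) x \<subseteq> insert x (orbit p b)"
proof
  have "permutation p" using p fin permutation_permutes by blast
  then have b_in: "b \<in> orbit p b" by (rule permutation_self_in_orbit)
  fix y assume "y \<in> orbit (Transposition.transpose x b \<circ> p) x"
  then show "y \<in> insert x (orbit p b)"
  proof induction
    case base
    then show ?case using transpose_comp_apply(1)[OF p x] b_in by simp
  next
    case (step y)
    then consider "y = x" | "y \<in> orbit p b" by blast
    then show ?case
    proof cases
      case 1
      then show ?thesis using transpose_comp_apply(1)[OF p x] b_in by simp
    next
      case 2
      then have "y \<in> T" using permutes_orbit_subset[OF p b] by auto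
      then show ?thesis using transpose_comp_apply(2)[OF p x] 2 by (auto intro: orbit.step)
    qed
  qed
qed

lemma orbit_subset_orbit_transpose_comp:
  assumes p: "p permutes T" and x: "x \<notin> T" and b: "b \<in> T"
  shows "orbit p b \<subseteq> orbit (Transposition.transpose x b \<circ> p) x"
proof
  define \<sigma> where "\<sigma> = Transposition.transpose x b \<circ> p"
  have b_in: "b \<in> orbit \<sigma> x" using transpose_comp_apply(1)[OF p x] orbit.base[of \<sigma> x] by (simp add: \<sigma>_def)
  have closed: "p y \<in> orbit \<sigma> x" if "y \<in> T" "y \<in> orbit \<sigma> x" for y
    using transpose_comp_apply(2)[OF p x that(1), of b] orbit.step[OF that(2)] b_in
    by (cases "p y = b") (simp_all add: \<sigma>_def)
  fix y assume "y \<in> orbit p b"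
  then show "y \<in> orbit \<sigma> x"
  proof induction
    case base
    show ?case using closed[OF b b_in] .
  next
    case (step y)
    have "y \<in> T" using step.hyps permutes_orbit_subset[OF p b] by auto
    then show ?case using closed step.IH by blast
  qed
qed

lemma orbit_transpose_comp:
  assumes p: "p permutes T" and fin: "finite T" and x: "x \<notin> T" and b: "b \<in> T"
  shows "orbit (Transposition.transpose x b \<circ> p) x = insert x (orbit p b)"
proof -
  have "permutation (Transposition.transpose x b \<circ> p)"
    using p fin by (intro permutation_compose permutation_swap_id) (auto simp: permutation_permutes)
  then have "x \<in> orbit (Transposition.transpose x b \<circ> p) x" by (rule permutation_self_in_orbit)
  then show ?thesis
    using orbit_transpose_comp_subset[OF assms] orbit_subset_orbit_transpose_comp[OF p x b] by blast
qed

lemma transpose_comp_inj: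
  assumes "x \<notin> T" "p permutes T" "q permutes T"
    and eq: "Transposition.transpose x b \<circ> p = Transposition.transpose x c \<circ> q"
  shows "b = c \<and> p = q"
proof -
  have "b = (Transposition.transpose x b \<circ> p) x" using transpose_comp_apply(1)[OF assms(2,1)] by simp
  also have "\<dots> = c" using eq transpose_comp_apply(1)[OF assms(3,1)] by simp
  finally have bc: "b = c" .
  then have "Transposition.transpose x b \<circ> (Transposition.transpose x b \<circ> p) =
      Transposition.transpose x b \<circ> (Transposition.transpose x b \<circ> q)"
    using eq by simp
  with bc show ?thesis by (simp add: o_assoc)
qed

definition cyclic_perms :: "'a set \<Rightarrow> 'a \<Rightarrow> ('a \<Rightarrow> 'a) set" where
  "cyclic_perms A x = {\<tau>. \<tau> permutes A \<and> orbit \<tau> x = A}"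

lemma finite_cyclic_perms: "finite A \<Longrightarrow> finite (cyclic_perms A x)"
  unfolding cyclic_perms_def by (rule finite_subset[OF _ finite_permutations[of A]]) auto

text \<open>A cyclic permutation of \<open>insert x T\<close> arises from a unique cyclic permutation of \<open>T\<close>
  by inserting \<open>x\<close> in front of one of the points \<open>b \<in> T\<close>.\<close>

lemma bij_betw_insert_cyclic_perms:
  assumes fin: "finite T" and x: "x \<notin> T" and T: "T \<noteq> {}"
  shows "bij_betw (\<lambda>(b, p). Transposition.transpose x b \<circ> p)
    (SIGMA b:T. cyclic_perms T b) (cyclic_perms (insert x T) x)"
proof (rule bij_betw_imageI)
  show "inj_on (\<lambda>(b, p). Transposition.transpose x b \<circ> p) (SIGMA b:T. cyclic_perms T b)"
  proof (rule inj_onI)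
    fix u v assume "u \<in> (SIGMA b:T. cyclic_perms T b)" "v \<in> (SIGMA b:T. cyclic_perms T b)"
      and "(\<lambda>(b, p). Transposition.transpose x b \<circ> p) u = (\<lambda>(b, p). Transposition.transpose x b \<circ> p) v"
    then show "u = v" using transpose_comp_inj[OF x] by (auto simp: cyclic_perms_def)
  qed
  show "(\<lambda>(b, p). Transposition.transpose x b \<circ> p) ` (SIGMA b:T. cyclic_perms T b) = cyclic_perms (insert x T) x"
  proof (intro equalityI subsetI)
    fix \<sigma> assume "\<sigma> \<in> (\<lambda>(b, p). Transposition.transpose x b \<circ> p) ` (SIGMA b:T. cyclic_perms T b)"
    then obtain b p where bp: "b \<in> T" "p permutes T" "orbit p b = T" "\<sigma> = Transposition.transpose x b \<circ> p"
      by (auto simp: cyclic_perms_def)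
    have "\<sigma> permutes insert x T" unfolding bp(4)
      by (rule permutes_compose[OF permutes_subset[OF bp(2)] permutes_swap_id]) (use bp in auto)
    then show "\<sigma> \<in> cyclic_perms (insert x T) x"
      using orbit_transpose_comp[OF bp(2) fin x bp(1)] bp by (simp add: cyclic_perms_def)
  next
    fix \<sigma> assume "\<sigma> \<in> cyclic_perms (insert x T) x"
    then have \<sigma>: "\<sigma> permutes insert x T" "orbit \<sigma> x = insert x T" by (auto simp: cyclic_perms_def)
    define b where "b = \<sigma> x"
    define p where "p = Transposition.transpose x b \<circ> \<sigma>"
    have p: "p permutes T" unfolding p_def b_def by (rule permutes_insert_lemma[OF \<sigma>(1)])
    have \<sigma>_eq: "\<sigma> = Transposition.transpose x b \<circ> p" unfolding p_def by (simp add: fun_eq_iff)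
    have "b \<noteq> x"
    proof
      assume "b = x"
      then have "\<sigma> x = x" by (simp add: b_def)
      then have "orbit \<sigma> x = {x}" by (simp add: orbit_eq_singleton_iff)
      then have "insert x T = {x}" using \<sigma>(2) by simp
      then show False using T x by blast
    qed
    then have bT: "b \<in> T" using permutes_in_image[OF \<sigma>(1), of x] by (simp add: b_def)
    have "insert x (orbit p b) = insert x T"
      using orbit_transpose_comp[OF p fin x bT] \<sigma>(2) \<sigma>_eq by simp
    moreover have "x \<notin> orbit p b" using permutes_orbit_subset[OF p bT] x by auto
    ultimately have "orbit p b = T" using x by (metis Diff_insert_absorb)
    then show "\<sigma> \<in> (\<lambda>(b, p). Transposition.transpose x b \<circ> p) ` (SIGMA b:T. cyclic_perms T b)"
      using bT p \<sigma>_eq by (auto simp: cyclic_perms_def)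
  qed
qed

lemma card_cyclic_perms:
  assumes "finite A" "x \<in> A"
  shows "card (cyclic_perms A x) = fact (card A - 1)"
  using assms
proof (induction "card A" arbitrary: A x rule: less_induct)
  case less
  show ?case
  proof (cases "A = {x}")
    case True
    have "cyclic_perms A x = {id}"
      unfolding cyclic_perms_def True using orbit_eq_singleton_iff[of id x] by auto
    then show ?thesis using True by simp
  next
    case False
    define T where "T = A - {x}"
    have AT: "A = insert x T" "x \<notin> T" "finite T" using less.prems by (auto simp: T_def)
    have Tne: "T \<noteq> {}" using False less.prems by (auto simp: T_def)
    have cT: "card T = card A - 1" using less.prems by (simp add: T_def)
    have "card (cyclic_perms A x) = card (SIGMA b:T. cyclic_perms T b)"
      using bij_betw_same_card[OF bij_betw_insert_cyclic_perms[OF AT(3,2) Tne]] AT(1) by simp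
    also have "\<dots> = (\<Sum>b\<in>T. card (cyclic_perms T b))"
      using AT(3) by (intro card_SigmaI) (auto intro: finite_cyclic_perms)
    also have "\<dots> = (\<Sum>b\<in>T. fact (card T - 1))"
    proof (rule sum.cong[OF refl])
      fix b assume "b \<in> T"
      have "card T < card A" using cT less.prems card_gt_0_iff[of A] by auto
      then show "card (cyclic_perms T b) = fact (card T - 1)"
        by (rule less.hyps) (use AT \<open>b \<in> T\<close> in auto)
    qed
    also have "\<dots> = fact (card T)"
      using Tne AT by (simp add: fact_reduce[of "card T"] card_gt_0_iff)
    finally show ?thesis using cT by simp
  qed
qed

definition cycles_on :: "'a set \<Rightarrow> ('a \<Rightarrow> 'a) \<Rightarrow> 'a set set" where
  "cycles_on S \<sigma> = {orbit \<sigma> y | y. y \<in> S}"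

definition cycle_type :: "'a set \<Rightarrow> ('a \<Rightarrow> 'a) \<Rightarrow> nat multiset" where
  "cycle_type S \<sigma> = image_mset card (mset_set (cycles_on S \<sigma>))"

lemma finite_cycles_on: "finite S \<Longrightarrow> finite (cycles_on S \<sigma>)"
  unfolding cycles_on_def by simp

definition perm_glue :: "'a set \<Rightarrow> ('a \<Rightarrow> 'a) \<Rightarrow> ('a \<Rightarrow> 'a) \<Rightarrow> 'a \<Rightarrow> 'a" where
  "perm_glue A \<tau> \<rho> = (\<lambda>y. if y \<in> A then \<tau> y else \<rho> y)"

lemma perm_glue:
  assumes S: "finite S" and xA: "x \<in> A" and AS: "A \<subseteq> S"
    and \<tau>: "\<tau> \<in> cyclic_perms A x" and \<rho>: "\<rho> permutes (S - A)"
  shows "perm_glue A \<tau> \<rho> permutes S"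
    and "orbit (perm_glue A \<tau> \<rho>) x = A"
    and "perm_restrict (perm_glue A \<tau> \<rho>) A = \<tau>"
    and "perm_restrict (perm_glue A \<tau> \<rho>) (S - A) = \<rho>"
    and "cycle_type S (perm_glue A \<tau> \<rho>) = add_mset (card A) (cycle_type (S - A) \<rho>)"
proof -
  have \<tau>A: "\<tau> permutes A" and \<tau>x: "orbit \<tau> x = A" using \<tau> by (auto simp: cyclic_perms_def)
  have \<tau>in: "\<tau> y \<in> A" if "y \<in> A" for y using \<tau>A that by (simp add: permutes_in_image)
  have \<rho>in: "\<rho> y \<in> S - A" if "y \<in> S - A" for y using permutes_in_image[OF \<rho>, of y] that by simp
  have \<tau>out: "\<tau> y = y" if "y \<notin> A" for y using \<tau>A that by (simp add: permutes_not_in)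
  have \<rho>out: "\<rho> y = y" if "y \<notin> S - A" for y using \<rho> that by (simp add: permutes_not_in)
  have "perm_glue A \<tau> \<rho> y = (\<tau> \<circ> \<rho>) y" for y
    using \<rho>in[of y] by (cases "y \<in> S") (auto simp: perm_glue_def \<tau>out \<rho>out)
  then have "perm_glue A \<tau> \<rho> = \<tau> \<circ> \<rho>" by blast
  then show "perm_glue A \<tau> \<rho> permutes S"
    using permutes_compose[OF permutes_subset[OF \<rho>] permutes_subset[OF \<tau>A]] AS by auto
  show "perm_restrict (perm_glue A \<tau> \<rho>) A = \<tau>"
    by (auto simp: fun_eq_iff perm_restrict_def perm_glue_def \<tau>out)
  show "perm_restrict (perm_glue A \<tau> \<rho>) (S - A) = \<rho>"
    by (auto simp: fun_eq_iff perm_restrict_def perm_glue_def \<rho>out)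
  have cycl: "cyclic_on \<tau> A" unfolding cyclic_on_def using xA \<tau>x by blast
  have oA: "orbit (perm_glue A \<tau> \<rho>) y = A" if "y \<in> A" for y
  proof -
    have "orbit (perm_glue A \<tau> \<rho>) y = orbit \<tau> y"
      by (rule orbit_cong0[OF that]) (auto simp: perm_glue_def \<tau>in)
    then show ?thesis using orbit_cyclic_eq3[OF cycl that] by simp
  qed
  then show "orbit (perm_glue A \<tau> \<rho>) x = A" using xA by simp
  have oB: "orbit (perm_glue A \<tau> \<rho>) y = orbit \<rho> y" if "y \<in> S - A" for y
    by (rule orbit_cong0[OF that]) (use \<rho>in in \<open>auto simp: perm_glue_def Pi_def\<close>)
  have "cycles_on S (perm_glue A \<tau> \<rho>) = insert A (cycles_on (S - A) \<rho>)"
  proof -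
    have "S = A \<union> (S - A)" using AS by blast
    then have "cycles_on S (perm_glue A \<tau> \<rho>) =
        {orbit (perm_glue A \<tau> \<rho>) y | y. y \<in> A} \<union> {orbit (perm_glue A \<tau> \<rho>) y | y. y \<in> S - A}"
      unfolding cycles_on_def by blast
    also have "\<dots> = {A} \<union> cycles_on (S - A) \<rho>"
      using oA oB xA unfolding cycles_on_def by blast
    finally show ?thesis by simp
  qed
  moreover have "A \<notin> cycles_on (S - A) \<rho>"
    using permutes_orbit_subset[OF \<rho>] xA by (fastforce simp: cycles_on_def)
  ultimately show "cycle_type S (perm_glue A \<tau> \<rho>) = add_mset (card A) (cycle_type (S - A) \<rho>)"
    using S by (simp add: cycle_type_def finite_cycles_on)
qed

lemma perm_split_orbit:
  assumes S: "finite S" and \<sigma>: "\<sigma> permutes S" and x: "x \<in> S"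
  defines "A \<equiv> orbit \<sigma> x"
  shows "x \<in> A" "A \<subseteq> S" "perm_restrict \<sigma> A \<in> cyclic_perms A x"
    "perm_restrict \<sigma> (S - A) permutes (S - A)"
    "perm_glue A (perm_restrict \<sigma> A) (perm_restrict \<sigma> (S - A)) = \<sigma>"
proof -
  have perm: "permutation \<sigma>" using S \<sigma> permutation_permutes by blast
  show xA: "x \<in> A" unfolding A_def by (rule permutation_self_in_orbit[OF perm])
  show AS: "A \<subseteq> S" unfolding A_def by (rule permutes_orbit_subset[OF \<sigma> x])
  have cycl: "cyclic_on \<sigma> A" unfolding A_def by (rule cyclic_on_orbit[OF \<sigma> S])
  have sA: "\<sigma> y \<in> A" if "y \<in> A" for y by (rule cyclic_on_inI[OF cycl that])
  have injA: "inj_on \<sigma> A" using permutes_inj[OF \<sigma>] by (simp add: inj_on_def inj_def)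
  have "\<sigma> ` A = A"
    by (rule endo_inj_surj[OF finite_subset[OF AS S] _ injA]) (use sA in auto)
  then have "bij_betw (perm_restrict \<sigma> A) A A"
    using injA by (intro bij_betw_imageI) (auto simp: inj_on_def perm_restrict_def)
  then have "perm_restrict \<sigma> A permutes A"
    by (rule bij_imp_permutes) (simp add: perm_restrict_def)
  moreover have "orbit (perm_restrict \<sigma> A) x = A"
    unfolding A_def by (rule orbit_cong0[OF xA[unfolded A_def]]) (auto simp: perm_restrict_def sA[unfolded A_def])
  ultimately show "perm_restrict \<sigma> A \<in> cyclic_perms A x" by (simp add: cyclic_perms_def)
  show "perm_restrict \<sigma> (S - A) permutes (S - A)" by (rule perm_restrict_diff_cyclic[OF \<sigma> cycl])
  show "perm_glue A (perm_restrict \<sigma> A) (perm_restrict \<sigma> (S - A)) = \<sigma>"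
    using \<sigma> by (auto simp: fun_eq_iff perm_glue_def perm_restrict_def permutes_not_in)
qed

lemma bij_betw_perm_glue:
  assumes S: "finite S" and x: "x \<in> S"
  shows "bij_betw (\<lambda>(A, \<tau>, \<rho>). perm_glue A \<tau> \<rho>)
    (SIGMA A:{A. x \<in> A \<and> A \<subseteq> S}. cyclic_perms A x \<times> {\<rho>. \<rho> permutes (S - A)})
    {\<sigma>. \<sigma> permutes S}"
proof (rule bij_betw_byWitness[where f' = "\<lambda>\<sigma>. (orbit \<sigma> x, perm_restrict \<sigma> (orbit \<sigma> x),
    perm_restrict \<sigma> (S - orbit \<sigma> x))"], goal_cases)
  case 1
  show ?case using perm_glue(2-4)[OF S] by auto
next
  case 2
  show ?case using perm_split_orbit(5)[OF S _ x] by auto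
next
  case 3
  show ?case using perm_glue(1)[OF S] by auto
next
  case 4
  show ?case using perm_split_orbit(1-4)[OF S _ x] by auto
qed

lemma sum_permutes_split_orbit:
  fixes F :: "nat \<Rightarrow> nat multiset \<Rightarrow> 'b::{comm_semiring_1,semiring_char_0}"
  assumes S: "finite S" and x: "x \<in> S"
  shows "(\<Sum>\<sigma> | \<sigma> permutes S. F (card (orbit \<sigma> x)) (cycle_type S \<sigma>)) =
    (\<Sum>A | x \<in> A \<and> A \<subseteq> S. fact (card A - 1) *
      (\<Sum>\<rho> | \<rho> permutes (S - A). F (card A) (add_mset (card A) (cycle_type (S - A) \<rho>))))"
proof -
  define \<A> where "\<A> = {A. x \<in> A \<and> A \<subseteq> S}"
  have fin\<A>: "finite \<A>" unfolding \<A>_def by (rule finite_subset[of _ "Pow S"]) (use S in auto)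
  have fin: "finite (cyclic_perms A x \<times> {\<rho>. \<rho> permutes S - A})" if "A \<in> \<A>" for A
    using that S by (intro finite_cartesian_product finite_cyclic_perms finite_permutations)
      (auto simp: \<A>_def finite_subset)
  have "(\<Sum>\<sigma> | \<sigma> permutes S. F (card (orbit \<sigma> x)) (cycle_type S \<sigma>)) =
      (\<Sum>(A, \<tau>, \<rho>) \<in> (SIGMA A:\<A>. cyclic_perms A x \<times> {\<rho>. \<rho> permutes (S - A)}).
        F (card (orbit (perm_glue A \<tau> \<rho>) x)) (cycle_type S (perm_glue A \<tau> \<rho>)))"
    unfolding \<A>_def by (subst sum.reindex_bij_betw[OF bij_betw_perm_glue[OF S x], symmetric])
      (simp add: case_prod_beta)
  also have "\<dots> = (\<Sum>A\<in>\<A>. \<Sum>(\<tau>, \<rho>) \<in> cyclic_perms A x \<times> {\<rho>. \<rho> permutes (S - A)}.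
        F (card (orbit (perm_glue A \<tau> \<rho>) x)) (cycle_type S (perm_glue A \<tau> \<rho>)))"
    by (rule sum.Sigma[symmetric]) (use fin\<A> fin in auto)
  also have "\<dots> = (\<Sum>A\<in>\<A>. \<Sum>\<tau>\<in>cyclic_perms A x. \<Sum>\<rho> | \<rho> permutes (S - A).
        F (card A) (add_mset (card A) (cycle_type (S - A) \<rho>)))"
    by (intro sum.cong refl, subst sum.cartesian_product[symmetric])
      (auto simp: \<A>_def perm_glue[OF S])
  also have "\<dots> = (\<Sum>A\<in>\<A>. fact (card A - 1) *
      (\<Sum>\<rho> | \<rho> permutes (S - A). F (card A) (add_mset (card A) (cycle_type (S - A) \<rho>))))"
    using S by (intro sum.cong refl) (auto simp: \<A>_def card_cyclic_perms finite_subset)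
  finally show ?thesis by (simp add: \<A>_def)
qed

lemma card_subsets_containing:
  assumes S: "finite S" and x: "x \<in> S" and l: "l \<ge> 1"
  shows "card {A. x \<in> A \<and> A \<subseteq> S \<and> card A = l} = (card S - 1) choose (l - 1)"
proof -
  have "bij_betw (\<lambda>A. A - {x}) {A. x \<in> A \<and> A \<subseteq> S \<and> card A = l} {B. B \<subseteq> S - {x} \<and> card B = l - 1}"
  proof (rule bij_betw_byWitness[where f' = "insert x"])
    show "(\<lambda>A. A - {x}) ` {A. x \<in> A \<and> A \<subseteq> S \<and> card A = l} \<subseteq> {B. B \<subseteq> S - {x} \<and> card B = l - 1}"
      using S by (auto simp: finite_subset)
    show "insert x ` {B. B \<subseteq> S - {x} \<and> card B = l - 1} \<subseteq> {A. x \<in> A \<and> A \<subseteq> S \<and> card A = l}"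
    proof
      fix A assume "A \<in> insert x ` {B. B \<subseteq> S - {x} \<and> card B = l - 1}"
      then obtain B where B: "A = insert x B" "B \<subseteq> S - {x}" "card B = l - 1" by auto
      have "finite B" using B(2) S finite_subset by blast
      then have "card A = Suc (l - 1)" using B by (simp add: subset_Diff_insert)
      then show "A \<in> {A. x \<in> A \<and> A \<subseteq> S \<and> card A = l}" using B x l by auto
    qed
  qed auto
  then have "card {A. x \<in> A \<and> A \<subseteq> S \<and> card A = l} = card {B. B \<subseteq> S - {x} \<and> card B = l - 1}"
    by (rule bij_betw_same_card)
  also have "\<dots> = card (S - {x}) choose (l - 1)" using S by (simp add: n_subsets)
  finally show ?thesis using S x by simp
qed

lemma choose_fact_fact:
  assumes "1 \<le> l" "l \<le> n"
  shows "of_nat ((n - 1) choose (l - 1)) * fact (l - 1) * fact (n - l) = (fact (n - 1) :: 'a::{comm_semiring_1,semiring_char_0})"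
proof -
  have "fact (l - 1) * fact ((n - 1) - (l - 1)) * ((n - 1) choose (l - 1)) = fact (n - 1)"
    using assms by (intro binomial_fact_lemma) auto
  moreover have "(n - 1) - (l - 1) = n - l" using assms by auto
  ultimately have "of_nat (fact (l - 1) * fact (n - l) * ((n - 1) choose (l - 1))) = (of_nat (fact (n - 1)) :: 'a)"
    by simp
  then show ?thesis by (simp add: mult_ac)
qed

lemma sum_subsets_containing_by_card:
  fixes \<phi> :: "nat \<Rightarrow> 'b::{comm_semiring_1,semiring_char_0}"
  assumes S: "finite S" and x: "x \<in> S"
  shows "(\<Sum>A | x \<in> A \<and> A \<subseteq> S. fact (card A - 1) * fact (card S - card A) * \<phi> (card A)) =
    fact (card S - 1) * (\<Sum>l=1..card S. \<phi> l)"
proof -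
  define n where "n = card S"
  define \<A> where "\<A> = {A. x \<in> A \<and> A \<subseteq> S}"
  have fin\<A>: "finite \<A>" unfolding \<A>_def by (rule finite_subset[of _ "Pow S"]) (use S in auto)
  have "card A \<in> {1..n}" if "A \<in> \<A>" for A
    using that S by (auto simp: \<A>_def n_def card_mono finite_subset Suc_le_eq card_gt_0_iff)
  then have "(\<Sum>A\<in>\<A>. fact (card A - 1) * fact (n - card A) * \<phi> (card A)) =
      (\<Sum>l=1..n. \<Sum>A | A \<in> \<A> \<and> card A = l. fact (card A - 1) * fact (n - card A) * \<phi> (card A))"
    by (intro sum.group[symmetric] fin\<A>) auto
  also have "\<dots> = (\<Sum>l=1..n. fact (n - 1) * \<phi> l)"
  proof (rule sum.cong[OF refl])
    fix l assume l: "l \<in> {1..n}"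
    have "{A. A \<in> \<A> \<and> card A = l} = {A. x \<in> A \<and> A \<subseteq> S \<and> card A = l}" by (auto simp: \<A>_def)
    then have "(\<Sum>A | A \<in> \<A> \<and> card A = l. fact (card A - 1) * fact (n - card A) * \<phi> (card A)) =
        of_nat ((n - 1) choose (l - 1)) * fact (l - 1) * fact (n - l) * \<phi> l"
      using card_subsets_containing[OF S x, of l] l by (simp add: n_def mult_ac)
    also have "\<dots> = fact (n - 1) * \<phi> l" using choose_fact_fact[of l n] l by (metis atLeastAtMost_iff)
    finally show "(\<Sum>A | A \<in> \<A> \<and> card A = l. fact (card A - 1) * fact (n - card A) * \<phi> (card A)) =
        fact (n - 1) * \<phi> l" .
  qed
  finally show ?thesis by (simp add: \<A>_def n_def sum_distrib_left)
qed

lemma sum_permutes_by_orbit_card: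
  fixes F :: "nat \<Rightarrow> nat multiset \<Rightarrow> 'b::{comm_semiring_1,semiring_char_0}"
  assumes S: "finite S" "x \<in> S"
    and blocks: "\<And>A. x \<in> A \<Longrightarrow> A \<subseteq> S \<Longrightarrow>
      (\<Sum>\<rho> | \<rho> permutes (S - A). F (card A) (add_mset (card A) (cycle_type (S - A) \<rho>))) =
        fact (card S - card A) * \<Phi> (card A)"
  shows "(\<Sum>\<sigma> | \<sigma> permutes S. F (card (orbit \<sigma> x)) (cycle_type S \<sigma>)) =
    fact (card S - 1) * (\<Sum>l=1..card S. \<Phi> l)"
proof -
  have "(\<Sum>\<sigma> | \<sigma> permutes S. F (card (orbit \<sigma> x)) (cycle_type S \<sigma>)) =
      (\<Sum>A | x \<in> A \<and> A \<subseteq> S. fact (card A - 1) * fact (card S - card A) * \<Phi> (card A))"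
    unfolding sum_permutes_split_orbit[OF S] by (intro sum.cong refl) (simp add: blocks mult.assoc)
  then show ?thesis using sum_subsets_containing_by_card[OF S, of \<Phi>] by simp
qed

definition cycle_type_avg :: "nat \<Rightarrow> (nat multiset \<Rightarrow> real) \<Rightarrow> real" where
  "cycle_type_avg n G = (\<Sum>\<sigma>\<in>perms n. G (cycle_type {1..n} \<sigma>)) / fact n"

lemma cycle_type_avg_0: "cycle_type_avg 0 G = G {#}"
  by (simp add: cycle_type_avg_def perms_def cycle_type_def cycles_on_def)

lemma cycle_type_avg_cong: "(\<And>M. G M = G' M) \<Longrightarrow> cycle_type_avg n G = cycle_type_avg n G'"
  by (simp add: cycle_type_avg_def)

lemma cycle_type_avg_cmult: "cycle_type_avg n (\<lambda>M. c * G M) = c * cycle_type_avg n G"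
  by (simp add: cycle_type_avg_def sum_distrib_left)

lemma cycle_type_avg_zero [simp]: "cycle_type_avg n (\<lambda>M. 0) = 0"
  by (simp add: cycle_type_avg_def)

lemma sum_permutes_cycle_type:
  fixes S :: "nat set"
  assumes "finite S"
  shows "(\<Sum>\<sigma> | \<sigma> permutes S. G (cycle_type S \<sigma>)) = fact (card S) * cycle_type_avg (card S) G"
  using assms
proof (induction "card S" arbitrary: S G rule: less_induct)
  case less
  define n where "n = card S"
  have split: "(\<Sum>\<sigma> | \<sigma> permutes T. G (cycle_type T \<sigma>)) =
      fact (n - 1) * (\<Sum>l=1..n. cycle_type_avg (n - l) (\<lambda>M. G (add_mset l M)))"
    if T: "finite T" "card T = n" "y \<in> T" for T :: "nat set" and y
  proof -
    have "(\<Sum>\<rho> | \<rho> permutes (T - A). G (add_mset (card A) (cycle_type (T - A) \<rho>))) =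
        fact (n - card A) * cycle_type_avg (n - card A) (\<lambda>M. G (add_mset (card A) M))"
      if "y \<in> A" "A \<subseteq> T" for A
    proof -
      have "card (T - A) = n - card A" "card (T - A) < card S"
        using T that psubset_card_mono[of T "T - A"] by (auto simp: n_def card_Diff_subset finite_subset)
      then show ?thesis using less.hyps[of "T - A"] T by simp
    qed
    then show ?thesis using sum_permutes_by_orbit_card[OF T(1,3), of "\<lambda>_ M. G M"] T(2) by simp
  qed
  show ?case
  proof (cases "n = 0")
    case True
    then have "S = {}" using less.prems by (simp add: n_def)
    then show ?thesis by (simp add: cycle_type_avg_0 cycle_type_def cycles_on_def)
  next
    case False
    then obtain x where "x \<in> S" by (auto simp: n_def card_gt_0_iff)
    moreover have "1 \<in> {1..n}" using False by simp
    ultimately have "(\<Sum>\<sigma> | \<sigma> permutes S. G (cycle_type S \<sigma>)) = (\<Sum>\<sigma> | \<sigma> permutes {1..n}. G (cycle_type {1..n} \<sigma>))"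
      using split[of S x] split[of "{1..n}" 1] less.prems by (simp add: n_def)
    then show ?thesis by (simp add: cycle_type_avg_def perms_def n_def)
  qed
qed

lemma sum_perms_by_L1:
  assumes n: "n \<ge> 1"
  shows "real n * (\<Sum>\<sigma>\<in>perms n. F (L1 \<sigma>) (cycle_type {1..n} \<sigma>)) / fact n =
    (\<Sum>l=1..n. cycle_type_avg (n - l) (\<lambda>M. F l (add_mset l M)))"
proof -
  have "(\<Sum>\<rho> | \<rho> permutes ({1..n} - A). F (card A) (add_mset (card A) (cycle_type ({1..n} - A) \<rho>))) =
      fact (n - card A) * cycle_type_avg (n - card A) (\<lambda>M. F (card A) (add_mset (card A) M))"
    if "A \<subseteq> {1..n}" for A
    using that sum_permutes_cycle_type[of "{1..n} - A" "\<lambda>M. F (card A) (add_mset (card A) M)"]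
    by (simp add: card_Diff_subset finite_subset)
  then have "(\<Sum>\<sigma>\<in>perms n. F (L1 \<sigma>) (cycle_type {1..n} \<sigma>)) =
      fact (n - 1) * (\<Sum>l=1..n. cycle_type_avg (n - l) (\<lambda>M. F l (add_mset l M)))"
    using sum_permutes_by_orbit_card[of "{1..n}" 1 F] n by (simp add: perms_def L1_def)
  then show ?thesis using n by (simp add: fact_reduce[of n])
qed

lemma cycle_type_avg_rec:
  assumes "n \<ge> 1"
  shows "real n * cycle_type_avg n G = (\<Sum>l=1..n. cycle_type_avg (n - l) (\<lambda>M. G (add_mset l M)))"
  using sum_perms_by_L1[OF assms, of "\<lambda>_ M. G M"] by (simp add: cycle_type_avg_def)

section \<open>Coefficients of the exponential of a power series\<close>

definition conv :: "(nat \<Rightarrow> real) \<Rightarrow> (nat \<Rightarrow> real) \<Rightarrow> nat \<Rightarrow> real" where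
  "conv u v n = (\<Sum>i\<le>n. u i * v (n - i))"

definition pow_coeff :: "(nat \<Rightarrow> real) \<Rightarrow> nat \<Rightarrow> nat \<Rightarrow> real" where
  "pow_coeff b m n = fps_nth (Abs_fps b ^ m) n"

text \<open>For \<open>b 0 = 0\<close> this is the coefficient of \<open>z\<^sup>n\<close> in \<open>exp (\<Sum>l. b l z\<^sup>l)\<close>: the terms
  with \<open>m > n\<close> vanish.\<close>

definition exp_coeff :: "(nat \<Rightarrow> real) \<Rightarrow> nat \<Rightarrow> real" where
  "exp_coeff b n = (\<Sum>m\<le>n. pow_coeff b m n / fact m)"

lemma pow_coeff_Suc: "pow_coeff b (Suc m) = conv b (pow_coeff b m)"
  by (simp add: fun_eq_iff pow_coeff_def conv_def fps_mult_nth atLeast0AtMost)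

lemma pow_coeff_0: "pow_coeff b 0 n = (if n = 0 then 1 else 0)"
  by (simp add: pow_coeff_def)

lemma pow_coeff_at_0: "b 0 = 0 \<Longrightarrow> pow_coeff b m 0 = (if m = 0 then 1 else 0)"
  by (simp add: pow_coeff_def fps_nth_power_0)

lemma pow_coeff_eq_0: "b 0 = 0 \<Longrightarrow> n < m \<Longrightarrow> pow_coeff b m n = 0"
proof (induction m arbitrary: n)
  case (Suc m)
  have "b i * pow_coeff b m (n - i) = 0" if "i \<le> n" for i
    using Suc that by (cases "i = 0") auto
  then show ?case by (simp add: pow_coeff_Suc conv_def sum.neutral)
qed simp

lemma pow_coeff_nonneg: "(\<And>j. b j \<ge> 0) \<Longrightarrow> pow_coeff b m n \<ge> 0"
  by (induction m arbitrary: n) (simp_all add: pow_coeff_0 pow_coeff_Suc conv_def sum_nonneg)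

lemma pow_coeff_deriv:
  assumes "m \<ge> 1"
  shows "real n * pow_coeff b m n = real m * (\<Sum>l=1..n. real l * b l * pow_coeff b (m - 1) (n - l))"
proof (cases n)
  case (Suc k)
  have "fps_nth (fps_deriv (Abs_fps b ^ m)) k =
      fps_nth (of_nat m * fps_deriv (Abs_fps b) * Abs_fps b ^ (m - 1)) k"
    by (simp only: fps_deriv_power')
  also have "\<dots> = real m * fps_nth (fps_deriv (Abs_fps b) * Abs_fps b ^ (m - 1)) k"
    by (simp add: fps_of_nat mult.assoc)
  also have "\<dots> = real m * (\<Sum>i=0..k. real (Suc i) * b (Suc i) * pow_coeff b (m - 1) (k - i))"
    by (simp add: fps_mult_nth pow_coeff_def)
  also have "(\<Sum>i=0..k. real (Suc i) * b (Suc i) * pow_coeff b (m - 1) (k - i)) =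
      (\<Sum>l=1..n. real l * b l * pow_coeff b (m - 1) (n - l))"
    unfolding Suc by (rule sum.reindex_bij_witness[of _ "\<lambda>l. l - 1" "Suc"]) auto
  finally show ?thesis using Suc by (simp add: pow_coeff_def)
qed simp

lemma exp_coeff_eq_sum: "b 0 = 0 \<Longrightarrow> n \<le> N \<Longrightarrow> exp_coeff b n = (\<Sum>m\<le>N. pow_coeff b m n / fact m)"
  unfolding exp_coeff_def by (rule sum.mono_neutral_left) (auto simp: pow_coeff_eq_0)

lemma exp_coeff_0: "exp_coeff b 0 = 1"
  by (simp add: exp_coeff_def pow_coeff_0)

text \<open>The coefficientwise form of \<open>(exp B)' = B' exp B\<close>.\<close>

lemma exp_coeff_rec:
  assumes b0: "b 0 = 0"
  shows "real n * exp_coeff b n = (\<Sum>l=1..n. real l * b l * exp_coeff b (n - l))"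
proof (cases "n = 0")
  case False
  have "real n * exp_coeff b n = (\<Sum>m\<le>n. real n * pow_coeff b m n / fact m)"
    by (simp add: exp_coeff_def sum_distrib_left)
  also have "\<dots> = (\<Sum>m=1..n. real n * pow_coeff b m n / fact m)"
    by (rule sum.mono_neutral_right) (use False in \<open>auto simp: pow_coeff_0 Suc_le_eq\<close>)
  also have "\<dots> = (\<Sum>m=1..n. \<Sum>l=1..n. real l * b l * (pow_coeff b (m - 1) (n - l) / fact (m - 1)))"
  proof (rule sum.cong[OF refl])
    fix m assume m: "m \<in> {1..n}"
    then have "fact m = real m * fact (m - 1)" by (simp add: fact_reduce)
    then show "real n * pow_coeff b m n / fact m =
        (\<Sum>l=1..n. real l * b l * (pow_coeff b (m - 1) (n - l) / fact (m - 1)))"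
      using pow_coeff_deriv[of m n b] m by (simp add: sum_divide_distrib)
  qed
  also have "\<dots> = (\<Sum>l=1..n. real l * b l * (\<Sum>m=1..n. pow_coeff b (m - 1) (n - l) / fact (m - 1)))"
    by (subst sum.swap) (simp add: sum_distrib_left)
  also have "\<dots> = (\<Sum>l=1..n. real l * b l * exp_coeff b (n - l))"
  proof (rule sum.cong[OF refl])
    fix l assume l: "l \<in> {1..n}"
    have "(\<Sum>m=1..n. pow_coeff b (m - 1) (n - l) / fact (m - 1)) = (\<Sum>m\<le>n - 1. pow_coeff b m (n - l) / fact m)"
      by (rule sum.reindex_bij_witness[of _ Suc "\<lambda>m. m - 1"]) (use False in auto)
    also have "\<dots> = exp_coeff b (n - l)" using l by (intro exp_coeff_eq_sum[symmetric] b0) auto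
    finally show "real l * b l * (\<Sum>m=1..n. pow_coeff b (m - 1) (n - l) / fact (m - 1)) =
        real l * b l * exp_coeff b (n - l)" by simp
  qed
  finally show ?thesis .
qed simp

definition seq_tail :: "nat \<Rightarrow> (nat \<Rightarrow> real) \<Rightarrow> nat \<Rightarrow> real" where
  "seq_tail k a l = (if l \<le> k then 0 else a l)"

definition seq_shift :: "nat \<Rightarrow> (nat \<Rightarrow> real) \<Rightarrow> nat \<Rightarrow> real" where
  "seq_shift s g n = (if s \<le> n then g (n - s) else 0)"

lemma exp_coeff_shift_rec:
  assumes b0: "b 0 = 0"
  shows "real s * seq_shift s (exp_coeff b) n + (\<Sum>l=1..n. real l * b l * seq_shift s (exp_coeff b) (n - l)) =
    real n * seq_shift s (exp_coeff b) n"
proof (cases "s \<le> n")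
  case True
  have "(\<Sum>l=1..n. real l * b l * seq_shift s (exp_coeff b) (n - l)) =
      (\<Sum>l=1..n - s. real l * b l * exp_coeff b (n - s - l))"
    by (rule sum.mono_neutral_cong_right) (auto simp: seq_shift_def add.commute)
  also have "\<dots> = real (n - s) * exp_coeff b (n - s)" by (rule exp_coeff_rec[where b = b, OF b0, symmetric])
  finally show ?thesis using True by (simp add: seq_shift_def algebra_simps)
qed (auto simp: seq_shift_def intro!: sum.neutral)

lemma seq_tail_sums:
  assumes "summable a"
  shows "seq_tail k a sums (suminf a - (\<Sum>j\<le>k. a j))"
proof -
  have "(\<lambda>j. a j - (if j \<in> {..k} then a j else 0)) sums (suminf a - (\<Sum>j\<le>k. a j))"
    by (rule sums_diff[OF summable_sums[OF assms] sums_If_finite_set]) simp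
  moreover have "(\<lambda>j. a j - (if j \<in> {..k} then a j else 0)) = seq_tail k a"
    by (auto simp: seq_tail_def)
  ultimately show ?thesis by simp
qed

lemma tendsto_suminf_dominated:
  fixes f :: "nat \<Rightarrow> nat \<Rightarrow> real"
  assumes "\<And>k. (\<lambda>n. f k n) \<longlonglongrightarrow> g k" and "\<And>k n. norm (f k n) \<le> M k" and "summable M"
  shows "(\<lambda>n. \<Sum>k. f k n) \<longlonglongrightarrow> (\<Sum>k. g k)"
  using tannerys_theorem[OF assms(1) always_eventually assms(3)] assms(2) by auto

lemma pow_coeff_sums:
  assumes b: "\<And>n. b n \<ge> 0" "summable b"
  shows "pow_coeff b m sums (suminf b ^ m)"
proof (induction m)
  case 0
  show ?case using sums_single[of 0 "\<lambda>_. 1::real"] by (simp add: pow_coeff_0[abs_def])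
next
  case (Suc m)
  have "(\<lambda>k. \<Sum>i\<le>k. b i * pow_coeff b m (k - i)) sums ((\<Sum>k. b k) * (\<Sum>k. pow_coeff b m k))"
    using Suc b pow_coeff_nonneg[of b m] by (intro Cauchy_product_sums) (auto simp: sums_iff)
  then show ?case using Suc by (simp add: pow_coeff_Suc conv_def[abs_def] sums_iff)
qed

lemma exp_coeff_sums:
  assumes b: "\<And>n. b n \<ge> 0" "summable b" and b0: "b 0 = 0"
  shows "exp_coeff b sums exp (suminf b)"
proof -
  define f where "f m N = (\<Sum>n<N. pow_coeff b m n) / fact m" for m N
  have lim: "(\<lambda>N. f m N) \<longlonglongrightarrow> suminf b ^ m / fact m" for m
    unfolding f_def using pow_coeff_sums[OF b, of m] by (intro tendsto_divide tendsto_const) (auto simp: sums_def)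
  have bound: "norm (f m N) \<le> suminf b ^ m / fact m" for m N
  proof -
    have "(\<Sum>n<N. pow_coeff b m n) \<le> suminf (pow_coeff b m)"
      by (rule sum_le_suminf) (use pow_coeff_sums[OF b, of m] pow_coeff_nonneg[of b m] b(1) in \<open>auto simp: sums_iff\<close>)
    then have "(\<Sum>n<N. pow_coeff b m n) \<le> suminf b ^ m"
      using pow_coeff_sums[OF b, of m] by (simp add: sums_iff)
    moreover have "(\<Sum>n<N. pow_coeff b m n) \<ge> 0" by (intro sum_nonneg pow_coeff_nonneg b)
    ultimately show ?thesis by (simp add: f_def divide_right_mono)
  qed
  have "summable (\<lambda>m. suminf b ^ m / fact m)"
    using summable_exp[of "suminf b"] by (simp add: divide_inverse_commute)
  then have "(\<lambda>N. \<Sum>m. f m N) \<longlonglongrightarrow> (\<Sum>m. suminf b ^ m / fact m)"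
    by (rule tendsto_suminf_dominated[OF lim bound])
  moreover have "(\<Sum>m. f m N) = (\<Sum>n<N. exp_coeff b n)" for N
  proof -
    have "(\<Sum>m. f m N) = (\<Sum>m<N. \<Sum>n<N. pow_coeff b m n / fact m)"
      by (subst suminf_finite[of "{..<N}"]) (auto simp: f_def pow_coeff_eq_0 b0 sum_divide_distrib)
    also have "\<dots> = (\<Sum>n<N. \<Sum>m\<le>N - 1. pow_coeff b m n / fact m)"
      by (subst sum.swap) (auto intro!: sum.cong)
    also have "\<dots> = (\<Sum>n<N. exp_coeff b n)"
      by (intro sum.cong refl exp_coeff_eq_sum[symmetric] b0) auto
    finally show ?thesis .
  qed
  moreover have "(\<Sum>m. suminf b ^ m / fact m) = exp (suminf b)"
    using exp_converges[of "suminf b"] by (simp add: sums_iff divide_inverse_commute scaleR_conv_of_real)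
  ultimately show ?thesis by (simp add: sums_def)
qed

lemma sums_exp_deriv_series: "(\<lambda>m. real m * x ^ (m - 1) / fact m) sums exp (x::real)"
proof -
  have "(\<lambda>j. x ^ j / fact j) sums exp x"
    using exp_converges[of x] by (simp add: divide_inverse_commute scaleR_conv_of_real)
  moreover have "real (Suc j) * x ^ (Suc j - 1) / fact (Suc j) = x ^ j / fact j" for j
    by (simp add: divide_simps)
  ultimately have "(\<lambda>j. real (Suc j) * x ^ (Suc j - 1) / fact (Suc j)) sums exp x" by simp
  then show ?thesis by (subst (asm) sums_Suc_iff) simp
qed

section \<open>Cycle weights\<close>

definition cycle_weight :: "(nat \<Rightarrow> real) \<Rightarrow> nat multiset \<Rightarrow> real" where
  "cycle_weight \<theta> M = prod_mset (image_mset \<theta> M)"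

lemma cycle_weight_empty [simp]: "cycle_weight \<theta> {#} = 1"
  by (simp add: cycle_weight_def)

lemma cycle_weight_add_mset [simp]: "cycle_weight \<theta> (add_mset l M) = \<theta> l * cycle_weight \<theta> M"
  by (simp add: cycle_weight_def)

lemma count_image_mset_card:
  "finite X \<Longrightarrow> count (image_mset card (mset_set X)) j = card {C\<in>X. card C = j}"
  by (simp add: count_image_mset Int_def conj_commute)

lemma Rcyc_eq_count_cycle_type: "Rcyc n j \<sigma> = count (cycle_type {1..n} \<sigma>) j"
  by (simp add: Rcyc_def cycle_type_def cycles_of_def cycles_on_def count_image_mset_card)

lemma Kcyc_eq_size_cycle_type: "Kcyc n \<sigma> = size (cycle_type {1..n} \<sigma>)"
  by (simp add: Kcyc_def cycle_type_def cycles_of_def cycles_on_def)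

lemma set_cycle_type_subset:
  assumes \<sigma>: "\<sigma> permutes {1..n}"
  shows "set_mset (cycle_type {1..n} \<sigma>) \<subseteq> {1..n}"
proof
  fix j assume "j \<in># cycle_type {1..n} \<sigma>"
  then obtain y where y: "y \<in> {1..n}" "j = card (orbit \<sigma> y)"
    using finite_cycles_on[of "{1..n}" \<sigma>] by (auto simp: cycle_type_def cycles_on_def)
  have sub: "orbit \<sigma> y \<subseteq> {1..n}" by (rule permutes_orbit_subset[OF \<sigma> y(1)])
  then have "finite (orbit \<sigma> y)" using finite_subset by blast
  then show "j \<in> {1..n}"
    using y card_mono[OF _ sub] orbit_nonempty[of \<sigma> y] by (auto simp: Suc_le_eq card_gt_0_iff)
qed

lemma prod_power_count:
  fixes f :: "'a \<Rightarrow> 'b::comm_monoid_mult"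
  assumes "set_mset M \<subseteq> J" "finite J"
  shows "(\<Prod>j\<in>J. f j ^ count M j) = prod_mset (image_mset f M)"
  using assms(1)
proof (induction M)
  case (add x M)
  have "(\<Prod>j\<in>J. f j ^ count (add_mset x M) j) = (\<Prod>j\<in>J. (if j = x then f j else 1) * f j ^ count M j)"
    by (rule prod.cong) auto
  also have "\<dots> = f x * (\<Prod>j\<in>J. f j ^ count M j)"
    using add.prems assms(2) by (simp add: prod.distrib prod.delta)
  finally show ?case using add by simp
qed simp

lemma wt_eq_cycle_weight: "\<sigma> permutes {1..n} \<Longrightarrow> wt \<theta> n \<sigma> = cycle_weight \<theta> (cycle_type {1..n} \<sigma>)"
  unfolding wt_def cycle_weight_def Rcyc_eq_count_cycle_type
  by (rule prod_power_count[OF set_cycle_type_subset]) auto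

lemma hseq_eq_cycle_type_avg: "hseq \<theta> n = cycle_type_avg n (cycle_weight \<theta>)"
  unfolding hseq_def cycle_type_avg_def perms_def
  by (simp add: wt_eq_cycle_weight)

lemma Pn_eq_cycle_type_avg:
  assumes "\<And>\<sigma>. \<sigma> permutes {1..n} \<Longrightarrow> E \<sigma> \<longleftrightarrow> E' (cycle_type {1..n} \<sigma>)"
  shows "Pn \<theta> n E = cycle_type_avg n (\<lambda>M. if E' M then cycle_weight \<theta> M else 0) / hseq \<theta> n"
proof -
  have fin: "finite (perms n)" unfolding perms_def by (rule finite_permutations) simp
  have "(\<Sum>\<sigma>\<in>{\<sigma>\<in>perms n. E \<sigma>}. wt \<theta> n \<sigma>) = (\<Sum>\<sigma>\<in>perms n. if E \<sigma> then wt \<theta> n \<sigma> else 0)"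
    by (rule sum.inter_filter[OF fin])
  also have "\<dots> = fact n * cycle_type_avg n (\<lambda>M. if E' M then cycle_weight \<theta> M else 0)"
    unfolding cycle_type_avg_def perms_def by (auto simp: wt_eq_cycle_weight assms intro!: sum.cong)
  finally show ?thesis by (simp add: Pn_def)
qed

lemma hseq_0: "hseq \<theta> 0 = 1"
  by (simp add: hseq_eq_cycle_type_avg cycle_type_avg_0)

lemma hseq_rec:
  assumes "n \<ge> 1"
  shows "real n * hseq \<theta> n = (\<Sum>l=1..n. \<theta> l * hseq \<theta> (n - l))"
  using cycle_type_avg_rec[OF assms, of "cycle_weight \<theta>"]
  by (simp add: hseq_eq_cycle_type_avg cycle_type_avg_cmult)

lemma hseq_pos:
  assumes "\<And>n. n \<ge> 1 \<Longrightarrow> \<theta> n > 0"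
  shows "hseq \<theta> n > 0"
proof -
  have "(\<Sum>\<sigma>\<in>perms n. wt \<theta> n \<sigma>) > 0"
    unfolding wt_def using assms finite_permutations[of "{1..n}"]
    by (intro sum_pos prod_pos zero_less_power) (auto simp: perms_def intro: exI[of _ id])
  then show ?thesis by (simp add: hseq_def)
qed

lemma hseq_eq_exp_coeff: "hseq \<theta> n = exp_coeff (\<lambda>l. \<theta> l / real l) n"
proof (induction n rule: less_induct)
  case (less n)
  show ?case
  proof (cases "n = 0")
    case False
    have "real n * hseq \<theta> n = (\<Sum>l=1..n. real l * (\<theta> l / real l) * exp_coeff (\<lambda>l. \<theta> l / real l) (n - l))"
      using hseq_rec[of n \<theta>] False less.IH by (auto intro!: sum.cong)
    also have "\<dots> = real n * exp_coeff (\<lambda>l. \<theta> l / real l) n"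
      by (rule exp_coeff_rec[symmetric]) simp
    finally show ?thesis using False by simp
  qed (simp add: hseq_0 exp_coeff_0)
qed

lemma sum_perms_filter:
  "(\<Sum>\<sigma>\<in>{\<sigma>\<in>perms n. E \<sigma>}. wt \<theta> n \<sigma>) = (\<Sum>\<sigma>\<in>perms n. if E \<sigma> then wt \<theta> n \<sigma> else 0)"
  by (rule sum.inter_filter) (simp add: perms_def finite_permutations)

lemma Pn_L1_eq:
  assumes mn: "m < n"
  shows "Pn \<theta> n (\<lambda>\<sigma>. L1 \<sigma> + m = n) = \<theta> (n - m) * hseq \<theta> m / (real n * hseq \<theta> n)"
proof -
  have n: "n \<ge> 1" using mn by simp
  define F where "F l M = (if l + m = n then cycle_weight \<theta> M else 0)" for l M
  have "(\<Sum>\<sigma>\<in>{\<sigma>\<in>perms n. L1 \<sigma> + m = n}. wt \<theta> n \<sigma>) = (\<Sum>\<sigma>\<in>perms n. F (L1 \<sigma>) (cycle_type {1..n} \<sigma>))"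
    unfolding sum_perms_filter by (rule sum.cong) (auto simp: F_def perms_def wt_eq_cycle_weight)
  moreover have "real n * (\<Sum>\<sigma>\<in>perms n. F (L1 \<sigma>) (cycle_type {1..n} \<sigma>)) / fact n =
      (\<Sum>l=1..n. if l = n - m then \<theta> (n - m) * hseq \<theta> m else 0)"
    unfolding sum_perms_by_L1[OF n]
  proof (intro sum.cong refl)
    fix l assume "l \<in> {1..n}"
    show "cycle_type_avg (n - l) (\<lambda>M. F l (add_mset l M)) = (if l = n - m then \<theta> (n - m) * hseq \<theta> m else 0)"
    proof (cases "l = n - m")
      case True
      then show ?thesis using mn by (simp add: F_def cycle_type_avg_cmult hseq_eq_cycle_type_avg)
    next
      case False
      then have "l + m \<noteq> n" using mn by auto
      then show ?thesis using False by (simp add: F_def)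
    qed
  qed
  moreover have "(\<Sum>l=1..n. if l = n - m then \<theta> (n - m) * hseq \<theta> m else 0) = \<theta> (n - m) * hseq \<theta> m"
    using mn by (subst sum.delta) auto
  moreover have "fact n = real n * fact (n - 1)" using n by (simp add: fact_reduce)
  ultimately show ?thesis using n by (simp add: Pn_def field_simps)
qed

lemma cycle_type_avg_size:
  "cycle_type_avg n (\<lambda>M. if size M = m then cycle_weight \<theta> M else 0) =
    pow_coeff (\<lambda>l. \<theta> l / real l) m n / fact m"
proof (induction n arbitrary: m rule: less_induct)
  case (less n)
  define a where "a = (\<lambda>l. \<theta> l / real l)"
  show ?case
  proof (cases "n = 0")
    case True
    then show ?thesis by (simp add: cycle_type_avg_0 pow_coeff_at_0 a_def)
  next
    case False
    then have n: "n \<ge> 1" by simp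
    have "real n * cycle_type_avg n (\<lambda>M. if size M = m then cycle_weight \<theta> M else 0) =
        (\<Sum>l=1..n. cycle_type_avg (n - l) (\<lambda>M. if Suc (size M) = m then \<theta> l * cycle_weight \<theta> M else 0))"
      unfolding cycle_type_avg_rec[OF n] by (simp cong: if_cong)
    also have "\<dots> = real n * pow_coeff a m n / fact m"
    proof (cases m)
      case 0
      then show ?thesis using n by (simp add: pow_coeff_0)
    next
      case (Suc m')
      have "(\<Sum>l=1..n. cycle_type_avg (n - l) (\<lambda>M. if Suc (size M) = m then \<theta> l * cycle_weight \<theta> M else 0)) =
          (\<Sum>l=1..n. real l * a l * pow_coeff a m' (n - l)) / fact m'"
        unfolding sum_divide_distrib
      proof (intro sum.cong refl)
        fix l assume "l \<in> {1..n}"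
        then show "cycle_type_avg (n - l) (\<lambda>M. if Suc (size M) = m then \<theta> l * cycle_weight \<theta> M else 0) =
            real l * a l * pow_coeff a m' (n - l) / fact m'"
          using less.IH[of "n - l" m'] cycle_type_avg_cmult[of "n - l" "\<theta> l"]
          by (simp add: Suc a_def cycle_type_avg_cong[of _ "\<lambda>M. \<theta> l * (if size M = m' then cycle_weight \<theta> M else 0)"])
      qed
      also have "\<dots> = real n * pow_coeff a m n / fact m"
      proof -
        have "real n * pow_coeff a m n = real m * (\<Sum>l=1..n. real l * a l * pow_coeff a m' (n - l))"
          using pow_coeff_deriv[of m n a] Suc by simp
        moreover have "fact m = real m * fact m'" "real m > 0" using Suc by simp_all
        ultimately show ?thesis by simp
      qed
      finally show ?thesis .
    qed
    finally have "real n * cycle_type_avg n (\<lambda>M. if size M = m then cycle_weight \<theta> M else 0) =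
        real n * (pow_coeff a m n / fact m)" by simp
    then show ?thesis using n unfolding a_def by (subst (asm) mult_left_cancel) auto
  qed
qed

lemma Pn_Kcyc_eq:
  "Pn \<theta> n (\<lambda>\<sigma>. Kcyc n \<sigma> = m) = pow_coeff (\<lambda>l. \<theta> l / real l) m n / (fact m * hseq \<theta> n)"
  by (subst Pn_eq_cycle_type_avg[where E' = "\<lambda>M. size M = m"])
    (simp_all add: Kcyc_eq_size_cycle_type cycle_type_avg_size)

definition has_counts :: "nat \<Rightarrow> (nat \<Rightarrow> nat) \<Rightarrow> nat multiset \<Rightarrow> bool" where
  "has_counts k r M \<longleftrightarrow> (\<forall>j\<in>{1..k}. count M j = r j)"

definition poisson_weight :: "(nat \<Rightarrow> real) \<Rightarrow> nat \<Rightarrow> (nat \<Rightarrow> nat) \<Rightarrow> real" where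
  "poisson_weight a k r = (\<Prod>j\<in>{1..k}. a j ^ r j / fact (r j))"

definition weighted_count :: "nat \<Rightarrow> (nat \<Rightarrow> nat) \<Rightarrow> nat" where
  "weighted_count k r = (\<Sum>j\<in>{1..k}. j * r j)"

lemma has_counts_add_mset:
  assumes "l \<ge> 1"
  shows "has_counts k r (add_mset l M) \<longleftrightarrow>
    (if l \<le> k then r l \<ge> 1 \<and> has_counts k (r(l := r l - 1)) M else has_counts k r M)"
  using assms unfolding has_counts_def by (auto split: if_splits)

lemma has_counts_empty: "has_counts k r {#} \<longleftrightarrow> weighted_count k r = 0"
  by (auto simp: has_counts_def weighted_count_def)

lemma poisson_weight_dec:
  assumes l: "l \<in> {1..k}" and rl: "r l \<ge> 1"
  shows "real (r l) * poisson_weight a k r = a l * poisson_weight a k (r(l := r l - 1))"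
proof -
  obtain q where q: "r l = Suc q" using rl by (cases "r l") auto
  define rest where "rest = (\<Prod>j\<in>{1..k} - {l}. a j ^ r j / fact (r j))"
  have A: "poisson_weight a k r = a l ^ Suc q / fact (Suc q) * rest"
    unfolding poisson_weight_def rest_def q[symmetric] by (rule prod.remove) (use l in auto)
  have B: "poisson_weight a k (r(l := q)) = a l ^ q / fact q * rest"
    unfolding poisson_weight_def rest_def by (subst prod.remove[OF _ l]) (auto intro!: prod.cong)
  have "r l - 1 = q" using q by simp
  then show ?thesis unfolding \<open>r l - 1 = q\<close> A B by (simp del: of_nat_Suc add: q divide_simps)
qed

lemma weighted_count_dec:
  assumes l: "l \<in> {1..k}" and rl: "r l \<ge> 1"
  shows "weighted_count k r = weighted_count k (r(l := r l - 1)) + l"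
proof -
  obtain q where q: "r l = Suc q" using rl by (cases "r l") auto
  have "(\<Sum>j\<in>{1..k} - {l}. j * (r(l := q)) j) = (\<Sum>j\<in>{1..k} - {l}. j * r j)"
    by (rule sum.cong) auto
  then show ?thesis
    unfolding weighted_count_def using sum.remove[OF _ l, of "\<lambda>j. j * r j"]
      sum.remove[OF _ l, of "\<lambda>j. j * (r(l := q)) j"]
    by (simp add: q)
qed

lemma sum_weighted_count:
  assumes "weighted_count k r \<le> n"
  shows "(\<Sum>l=1..n. real l * real (if l \<le> k then r l else 0)) = real (weighted_count k r)"
proof -
  have "r l = 0" if "l \<le> k" "n < l" for l
    using member_le_sum[of l "{1..k}" "\<lambda>j. j * r j"] that assms
    by (cases "r l") (auto simp: weighted_count_def)
  then have "(\<Sum>l=1..n. real l * real (if l \<le> k then r l else 0)) =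
      (\<Sum>l=1..n+k. real l * real (if l \<le> k then r l else 0))"
    by (intro sum.mono_neutral_left) auto
  also have "\<dots> = (\<Sum>l=1..k. real l * real (r l))"
    by (rule sum.mono_neutral_cong_right) auto
  finally show ?thesis by (simp add: weighted_count_def)
qed

lemma poisson_weight_exp:
  "poisson_weight a k r * exp (- (\<Sum>j=1..k. a j)) = (\<Prod>j=1..k. poisson (a j) (r j))"
proof -
  have "exp (- (\<Sum>j=1..k. a j)) = (\<Prod>j=1..k. exp (- a j))" by (simp add: exp_sum[symmetric] sum_negf)
  then show ?thesis by (simp add: poisson_weight_def poisson_def prod.distrib[symmetric])
qed

lemma cycle_type_avg_counts_add_mset:
  fixes \<theta> :: "nat \<Rightarrow> real"
  defines "a \<equiv> \<lambda>l. \<theta> l / real l"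
  assumes l: "1 \<le> l" "l \<le> n"
    and IH: "\<And>r'. cycle_type_avg (n - l) (\<lambda>M. if has_counts k r' M then cycle_weight \<theta> M else 0) =
      poisson_weight a k r' * seq_shift (weighted_count k r') g (n - l)"
  shows "cycle_type_avg (n - l) (\<lambda>M. if has_counts k r (add_mset l M) then cycle_weight \<theta> (add_mset l M) else 0) =
    poisson_weight a k r * (real l * real (if l \<le> k then r l else 0) * seq_shift (weighted_count k r) g n
      + real l * seq_tail k a l * seq_shift (weighted_count k r) g (n - l))"
proof -
  define s where "s = weighted_count k r"
  have \<theta>l: "\<theta> l = real l * a l" using l by (simp add: a_def)
  have IH': "cycle_type_avg (n - l) (\<lambda>M. if has_counts k r' M then \<theta> l * cycle_weight \<theta> M else 0) =
      \<theta> l * (poisson_weight a k r' * seq_shift (weighted_count k r') g (n - l))" for r'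
    using IH[of r'] cycle_type_avg_cmult[of "n - l" "\<theta> l"]
    by (simp add: cycle_type_avg_cong[of _ "\<lambda>M. \<theta> l * (if has_counts k r' M then cycle_weight \<theta> M else 0)"])
  consider "l \<le> k" "r l \<ge> 1" | "l \<le> k" "r l = 0" | "\<not> l \<le> k" by linarith
  then show ?thesis
  proof cases
    case 1
    have "weighted_count k (r(l := r l - 1)) = s - l" "l \<le> s"
      using weighted_count_dec[of l k r] 1 l by (auto simp: s_def)
    then have "seq_shift (weighted_count k (r(l := r l - 1))) g (n - l) = seq_shift s g n"
      using l by (auto simp: seq_shift_def)
    moreover have "\<theta> l * poisson_weight a k (r(l := r l - 1)) = real l * real (r l) * poisson_weight a k r"
      using poisson_weight_dec[of l k r a] 1 l by (simp add: \<theta>l)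
    ultimately show ?thesis using 1 l IH'[of "r(l := r l - 1)"]
      by (simp add: has_counts_add_mset seq_tail_def s_def cong: if_cong)
  next
    case 2
    then show ?thesis using l by (simp add: has_counts_add_mset seq_tail_def cong: if_cong)
  next
    case 3
    then show ?thesis using l IH'[of r]
      by (simp add: has_counts_add_mset seq_tail_def \<theta>l cong: if_cong)
  qed
qed

text \<open>The cycle counts \<open>R\<^sub>1, \<dots>, R\<^sub>k\<close> factor off: what remains is a permutation without cycles
  of length \<open>\<le> k\<close> on the \<open>n - \<Sum>j r\<^sub>j\<close> remaining points, weighted by \<open>seq_tail k a\<close>.\<close>

lemma cycle_type_avg_counts:
  fixes \<theta> :: "nat \<Rightarrow> real"
  defines "a \<equiv> \<lambda>l. \<theta> l / real l"
  shows "cycle_type_avg n (\<lambda>M. if has_counts k r M then cycle_weight \<theta> M else 0) =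
    poisson_weight a k r * seq_shift (weighted_count k r) (exp_coeff (seq_tail k a)) n"
proof (induction n arbitrary: r rule: less_induct)
  case (less n)
  define s where "s = weighted_count k r"
  define g where "g = exp_coeff (seq_tail k a)"
  show ?case
  proof (cases "n = 0")
    case True
    then show ?thesis
      by (cases "s = 0") (auto simp: cycle_type_avg_0 has_counts_empty poisson_weight_def
          has_counts_def weighted_count_def seq_shift_def exp_coeff_0 s_def)
  next
    case False
    then have n: "n \<ge> 1" by simp
    have "real n * cycle_type_avg n (\<lambda>M. if has_counts k r M then cycle_weight \<theta> M else 0) =
        (\<Sum>l=1..n. poisson_weight a k r * (real l * real (if l \<le> k then r l else 0) * seq_shift s g n
          + real l * seq_tail k a l * seq_shift s g (n - l)))"
      unfolding cycle_type_avg_rec[OF n] s_def g_def a_def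
      by (intro sum.cong refl cycle_type_avg_counts_add_mset less.IH[unfolded a_def]) auto
    also have "\<dots> = poisson_weight a k r * ((\<Sum>l=1..n. real l * real (if l \<le> k then r l else 0)) * seq_shift s g n
        + (\<Sum>l=1..n. real l * seq_tail k a l * seq_shift s g (n - l)))"
      by (simp only: sum.distrib sum_distrib_left[symmetric] sum_distrib_right[symmetric])
    also have "\<dots> = poisson_weight a k r * (real s * seq_shift s g n
        + (\<Sum>l=1..n. real l * seq_tail k a l * seq_shift s g (n - l)))"
      using sum_weighted_count[of k r n] by (cases "s \<le> n") (simp_all add: s_def seq_shift_def)
    also have "\<dots> = real n * (poisson_weight a k r * seq_shift s g n)"
      using exp_coeff_shift_rec[of "seq_tail k a" s n] by (simp add: g_def seq_tail_def)
    finally show ?thesis using n by (simp add: s_def g_def)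
  qed
qed

lemma Pn_Rcyc_eq:
  fixes \<theta> :: "nat \<Rightarrow> real"
  defines "a \<equiv> \<lambda>l. \<theta> l / real l"
  shows "Pn \<theta> n (\<lambda>\<sigma>. \<forall>j\<in>{1..k}. Rcyc n j \<sigma> = r j) =
    poisson_weight a k r * seq_shift (weighted_count k r) (exp_coeff (seq_tail k a)) n / hseq \<theta> n"
proof -
  have "Pn \<theta> n (\<lambda>\<sigma>. \<forall>j\<in>{1..k}. Rcyc n j \<sigma> = r j) =
      cycle_type_avg n (\<lambda>M. if has_counts k r M then cycle_weight \<theta> M else 0) / hseq \<theta> n"
    by (rule Pn_eq_cycle_type_avg) (simp add: Rcyc_eq_count_cycle_type has_counts_def)
  then show ?thesis by (simp add: cycle_type_avg_counts a_def)
qed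

section \<open>Subexponential sequences\<close>

lemma LIMSEQ_diff_const_index:
  assumes "(g \<longlongrightarrow> (L::real)) sequentially"
  shows "((\<lambda>n. g (n - k)) \<longlongrightarrow> L) sequentially"
  using filterlim_compose[OF assms filterlim_minus_const_nat_at_top] by (simp add: o_def)

lemma conv_split_half:
  "conv u v n = (\<Sum>i | i \<le> n \<and> 2 * i \<le> n. u i * v (n - i)) + (\<Sum>j | j \<le> n \<and> 2 * j < n. v j * u (n - j))"
proof -
  have "{..n} = {i. i \<le> n \<and> 2 * i \<le> n} \<union> {i. i \<le> n \<and> \<not> 2 * i \<le> n}" by auto
  then have "conv u v n = (\<Sum>i | i \<le> n \<and> 2 * i \<le> n. u i * v (n - i)) +
      (\<Sum>i | i \<le> n \<and> \<not> 2 * i \<le> n. u i * v (n - i))"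
    unfolding conv_def by (subst sum.union_disjoint[symmetric]) auto
  also have "(\<Sum>i | i \<le> n \<and> \<not> 2 * i \<le> n. u i * v (n - i)) = (\<Sum>j | j \<le> n \<and> 2 * j < n. v j * u (n - j))"
    by (rule sum.reindex_bij_witness[of _ "\<lambda>i. n - i" "\<lambda>j. n - j"]) auto
  finally show ?thesis .
qed

text \<open>The discrete analogue of a subexponential density: \<open>a\<^sub>j a\<^sub>n\<^sub>-\<^sub>j / a\<^sub>n\<close> is dominated by a summable
  sequence on \<open>j \<le> n/2\<close> and \<open>a\<^sub>n\<^sub>-\<^sub>s / a\<^sub>n \<rightarrow> 1\<close>. Then convolving with a summable sequence \<open>u = O(a)\<close>
  multiplies the tail asymptotics of \<open>a\<close> by \<open>\<Sum>u\<close>, which is the mechanism behind every limit below.\<close>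

locale subexp_seq =
  fixes a d :: "nat \<Rightarrow> real"
  assumes a_0: "a 0 = 0" and a_pos: "\<And>n. n \<ge> 1 \<Longrightarrow> a n > 0" and summable_a: "summable a"
    and summable_d: "summable d"
    and a_conv_bound: "\<And>j n. 1 \<le> j \<Longrightarrow> 2 * j \<le> n \<Longrightarrow> a j * a (n - j) / a n \<le> d j"
    and a_shift_ratio: "\<And>s. (\<lambda>n. a (n - s) / a n) \<longlonglongrightarrow> 1"
begin

lemma d_nonneg:
  assumes "j \<ge> 1"
  shows "d j \<ge> 0"
proof -
  have "a j * a (2 * j - j) / a (2 * j) \<le> d j" by (rule a_conv_bound) (use assms in auto)
  moreover have "a j * a (2 * j - j) / a (2 * j) \<ge> 0"
    using a_pos[of j] a_pos[of "2 * j"] assms by simp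
  ultimately show ?thesis by linarith
qed

definition dominated :: "(nat \<Rightarrow> real) \<Rightarrow> real \<Rightarrow> bool" where
  "dominated u C \<longleftrightarrow> (\<forall>n\<ge>1. \<bar>u n\<bar> \<le> C * a n)"

lemma dominated_const_nonneg:
  assumes "dominated u C"
  shows "C \<ge> 0"
proof -
  have "0 \<le> C * a 1" using assms abs_ge_zero[of "u 1"] unfolding dominated_def by (meson le_refl order_trans)
  then show ?thesis using a_pos[of 1] by (simp add: zero_le_mult_iff)
qed

lemma dominated_mono: "dominated u C \<Longrightarrow> C \<le> C' \<Longrightarrow> dominated u C'"
  unfolding dominated_def using a_pos by (meson less_imp_le mult_right_mono order_trans)

lemma dominated_ratio_bound: "dominated u C \<Longrightarrow> \<bar>u n / a n\<bar> \<le> C"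
  using a_pos[of n] a_0 dominated_const_nonneg[of u C]
  by (cases "n = 0") (auto simp: dominated_def abs_divide pos_divide_le_eq)

lemma summable_dominated: "dominated u C \<Longrightarrow> summable (\<lambda>n. \<bar>u n\<bar>)"
  unfolding dominated_def
  by (rule summable_comparison_test_ev[OF _ summable_mult[OF summable_a, of C]])
    (auto simp: eventually_sequentially)

lemma dominated_self: "dominated a 1"
  unfolding dominated_def using a_pos by (auto simp: less_imp_le)

lemma tendsto_ratio_self: "(\<lambda>n. a n / a n) \<longlonglongrightarrow> 1"
proof (rule tendsto_eventually)
  show "\<forall>\<^sub>F n in sequentially. a n / a n = 1"
    using eventually_ge_at_top[of 1] by eventually_elim (use a_pos in force)
qed

lemma conv_term_bound:
  assumes "dominated u Cu" "dominated v Cv" "1 \<le> k" "2 * k \<le> n"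
  shows "\<bar>u k * v (n - k) / a n\<bar> \<le> Cu * Cv * d k"
proof -
  have pos: "a (n - k) > 0" "a n > 0" "a k > 0" using a_pos assms(3,4) by auto
  have "\<bar>u k\<bar> * \<bar>v (n - k)\<bar> \<le> (Cu * a k) * (Cv * a (n - k))"
    using assms dominated_const_nonneg[OF assms(1)] by (intro mult_mono) (auto simp: dominated_def)
  then have "\<bar>u k * v (n - k) / a n\<bar> \<le> Cu * Cv * (a k * a (n - k) / a n)"
    using pos by (simp add: abs_mult divide_right_mono mult_ac)
  also have "\<dots> \<le> Cu * Cv * d k"
    using assms dominated_const_nonneg[OF assms(1)] dominated_const_nonneg[OF assms(2)]
    by (intro mult_left_mono a_conv_bound) auto
  finally show ?thesis .
qed

lemma tendsto_partial_conv:
  assumes du: "dominated u Cu" and dv: "dominated v Cv" and lv: "(\<lambda>n. v n / a n) \<longlonglongrightarrow> V"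
    and P: "\<And>n i. P n i \<Longrightarrow> 2 * i \<le> n" and ev: "\<And>i. eventually (\<lambda>n. P n i) sequentially"
  shows "(\<lambda>n. \<Sum>i | i \<le> n \<and> P n i. u i * v (n - i) / a n) \<longlonglongrightarrow> V * suminf u"
proof -
  define f where "f k n = (if P n k then u k * v (n - k) / a n else 0)" for k n
  define M where "M k = (if k = 0 then \<bar>u 0\<bar> * Cv else Cu * Cv * d k)" for k
  have lim: "(\<lambda>n. f k n) \<longlonglongrightarrow> u k * V" for k
  proof -
    have "(\<lambda>n. u k * (v (n - k) / a (n - k)) * (a (n - k) / a n)) \<longlonglongrightarrow> u k * V * 1"
      by (intro tendsto_mult tendsto_const LIMSEQ_diff_const_index[OF lv] a_shift_ratio)
    moreover have "eventually (\<lambda>n. u k * (v (n - k) / a (n - k)) * (a (n - k) / a n) = f k n) sequentially"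
      using eventually_ge_at_top[of "k + 1"] ev[of k]
    proof eventually_elim
      case (elim n)
      then have "a (n - k) > 0" using a_pos by simp
      then show ?case using elim by (simp add: f_def)
    qed
    ultimately show ?thesis by (simp add: tendsto_cong)
  qed
  have bound: "norm (f k n) \<le> M k" for k n
  proof -
    consider "\<not> P n k" | "P n k" "k = 0" | "P n k" "k \<ge> 1" by linarith
    then show ?thesis
    proof cases
      case 1
      then show ?thesis using d_nonneg[of k] dominated_const_nonneg[OF du] dominated_const_nonneg[OF dv]
        by (simp add: f_def M_def)
    next
      case 2
      then show ?thesis using mult_left_mono[OF dominated_ratio_bound[OF dv, of n], of "\<bar>u 0\<bar>"]
        by (simp add: f_def M_def abs_mult)
    next
      case 3
      then show ?thesis using conv_term_bound[OF du dv, of k n] P[of n k] by (simp add: f_def M_def)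
    qed
  qed
  have "summable (\<lambda>k. M (Suc k))"
    using summable_mult[OF summable_d, of "Cu * Cv"] by (simp add: M_def summable_Suc_iff)
  then have "(\<lambda>n. \<Sum>k. f k n) \<longlonglongrightarrow> (\<Sum>k. u k * V)"
    by (intro tendsto_suminf_dominated[OF lim bound]) (simp add: summable_Suc_iff)
  moreover have "(\<Sum>k. f k n) = (\<Sum>i | i \<le> n \<and> P n i. u i * v (n - i) / a n)" for n
    by (subst suminf_finite[of "{i. i \<le> n \<and> P n i}"]) (auto simp: f_def dest: P intro!: sum.cong)
  moreover have "(\<Sum>k. u k * V) = V * suminf u"
    using suminf_mult2[OF summable_rabs_cancel[OF summable_dominated[OF du]], of V] by (simp add: mult_ac)
  ultimately show ?thesis by simp
qed

lemma tendsto_conv_ratio: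
  assumes du: "dominated u Cu" and dv: "dominated v Cv"
    and lu: "(\<lambda>n. u n / a n) \<longlonglongrightarrow> U" and lv: "(\<lambda>n. v n / a n) \<longlonglongrightarrow> V"
  shows "(\<lambda>n. conv u v n / a n) \<longlonglongrightarrow> V * suminf u + U * suminf v"
proof -
  have "(\<lambda>n. \<Sum>i | i \<le> n \<and> 2 * i \<le> n. u i * v (n - i) / a n) \<longlonglongrightarrow> V * suminf u"
    by (rule tendsto_partial_conv[OF du dv lv]) (auto intro: eventually_ge_at_top)
  moreover have "(\<lambda>n. \<Sum>i | i \<le> n \<and> 2 * i < n. v i * u (n - i) / a n) \<longlonglongrightarrow> U * suminf v"
    by (rule tendsto_partial_conv[OF dv du lu]) (auto intro: eventually_gt_at_top)
  moreover have "conv u v n / a n = (\<Sum>i | i \<le> n \<and> 2 * i \<le> n. u i * v (n - i) / a n) +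
      (\<Sum>i | i \<le> n \<and> 2 * i < n. v i * u (n - i) / a n)" for n
    by (simp add: conv_split_half add_divide_distrib sum_divide_distrib)
  ultimately show ?thesis using tendsto_add by simp
qed

lemma conv_self_bounded: "\<exists>D\<ge>0. \<forall>n\<ge>1. conv a a n \<le> D * a n"
proof -
  have "convergent (\<lambda>n. conv a a n / a n)"
    using tendsto_conv_ratio[OF dominated_self dominated_self tendsto_ratio_self tendsto_ratio_self]
    by (auto simp: convergent_def)
  then have "Bseq (\<lambda>n. conv a a n / a n)" by (rule convergent_imp_Bseq)
  then obtain K where K: "K > 0" "\<And>n. \<bar>conv a a n / a n\<bar> \<le> K" by (auto simp: Bseq_def)
  have "conv a a n \<le> K * a n" if "n \<ge> 1" for n
    using K(2)[of n] a_pos[OF that] by (simp add: abs_le_iff pos_divide_le_eq)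
  then show ?thesis using K(1) by (intro exI[of _ K]) auto
qed

lemma dominated_conv:
  assumes du: "dominated u Cu" and dv: "dominated v Cv" and D: "\<And>n. n \<ge> 1 \<Longrightarrow> conv a a n \<le> D * a n"
  shows "dominated (conv u v) (\<bar>u 0\<bar> * Cv + \<bar>v 0\<bar> * Cu + Cu * Cv * D)"
  unfolding dominated_def
proof (intro allI impI)
  fix n :: nat assume n: "n \<ge> 1"
  have Cu: "Cu \<ge> 0" and Cv: "Cv \<ge> 0" using dominated_const_nonneg du dv by auto
  have set: "{..n} = insert 0 (insert n {1..<n})" using n by auto
  have "\<bar>\<Sum>i=1..<n. u i * v (n - i)\<bar> \<le> (\<Sum>i=1..<n. (Cu * a i) * (Cv * a (n - i)))"
    using du dv Cu Cv unfolding dominated_def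
    by (intro order_trans[OF sum_abs] sum_mono) (auto simp: abs_mult intro!: mult_mono)
  also have "\<dots> = Cu * Cv * conv a a n"
    unfolding conv_def set using n a_0 by (simp add: sum_distrib_left mult_ac)
  also have "\<dots> \<le> Cu * Cv * D * a n" using D[OF n] Cu Cv by (simp add: mult_left_mono mult.assoc)
  finally have middle: "\<bar>\<Sum>i=1..<n. u i * v (n - i)\<bar> \<le> Cu * Cv * D * a n" .
  have ends: "\<bar>u 0 * v n\<bar> \<le> \<bar>u 0\<bar> * Cv * a n" "\<bar>u n * v 0\<bar> \<le> \<bar>v 0\<bar> * Cu * a n"
    using du dv n unfolding dominated_def by (auto simp: abs_mult mult_left_mono mult.assoc mult.commute[of "\<bar>u n\<bar>"])
  have "conv u v n = u 0 * v n + u n * v 0 + (\<Sum>i=1..<n. u i * v (n - i))"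
    unfolding conv_def set using n by (simp add: add.assoc)
  then have "\<bar>conv u v n\<bar> \<le> \<bar>u 0\<bar> * Cv * a n + \<bar>v 0\<bar> * Cu * a n + Cu * Cv * D * a n"
    using middle ends by linarith
  then show "\<bar>conv u v n\<bar> \<le> (\<bar>u 0\<bar> * Cv + \<bar>v 0\<bar> * Cu + Cu * Cv * D) * a n"
    by (simp add: algebra_simps)
qed

lemma dominated_pow_coeff:
  assumes db: "dominated b Cb" and b0: "b 0 = 0"
  obtains K where "K \<ge> 0" "\<And>m. dominated (pow_coeff b m) (K ^ m)"
proof -
  obtain D where D: "D \<ge> 0" "\<And>n. n \<ge> 1 \<Longrightarrow> conv a a n \<le> D * a n" using conv_self_bounded by blast
  have Cb: "Cb \<ge> 0" using dominated_const_nonneg[OF db] .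
  define K where "K = 1 + Cb + Cb * D"
  have "dominated (pow_coeff b m) (K ^ m)" for m
  proof (induction m)
    case 0
    show ?case unfolding dominated_def using a_pos by (auto simp: pow_coeff_0 less_imp_le)
  next
    case (Suc m)
    have "\<bar>b 0\<bar> * K ^ m + \<bar>pow_coeff b m 0\<bar> * Cb + Cb * K ^ m * D \<le> K * K ^ m"
    proof (cases "m = 0")
      case False
      have "Cb * D * K ^ m \<le> K * K ^ m" using Cb D by (intro mult_right_mono) (auto simp: K_def)
      then show ?thesis using b0 False by (simp add: pow_coeff_at_0 mult_ac)
    qed (use b0 Cb D in \<open>simp_all add: pow_coeff_0 K_def\<close>)
    then show ?case
      using dominated_conv[OF db Suc D(2)] dominated_mono by (simp add: pow_coeff_Suc)
  qed
  moreover have "K \<ge> 0" using Cb D by (simp add: K_def)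
  ultimately show ?thesis using that by blast
qed

lemma tendsto_pow_coeff_ratio:
  assumes db: "dominated b Cb" and lb: "(\<lambda>n. b n / a n) \<longlonglongrightarrow> 1" and b0: "b 0 = 0"
    and b_nonneg: "\<And>n. b n \<ge> 0"
  shows "(\<lambda>n. pow_coeff b m n / a n) \<longlonglongrightarrow> real m * suminf b ^ (m - 1)"
proof (induction m)
  case 0
  have "(\<lambda>n. pow_coeff b 0 n / a n) = (\<lambda>n. 0)" using a_0 by (auto simp: pow_coeff_0)
  then show ?case by simp
next
  case (Suc m)
  obtain K where "\<And>m. dominated (pow_coeff b m) (K ^ m)" using dominated_pow_coeff[OF db b0] by blast
  then have "(\<lambda>n. conv b (pow_coeff b m) n / a n) \<longlonglongrightarrow>
      real m * suminf b ^ (m - 1) * suminf b + 1 * suminf (pow_coeff b m)"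
    by (intro tendsto_conv_ratio[OF db _ lb Suc])
  moreover have "suminf (pow_coeff b m) = suminf b ^ m"
    using pow_coeff_sums[OF b_nonneg summable_rabs_cancel[OF summable_dominated[OF db]]] by (simp add: sums_iff)
  moreover have "real m * suminf b ^ (m - 1) * suminf b + 1 * suminf b ^ m = real (Suc m) * suminf b ^ (Suc m - 1)"
    by (cases m) (auto simp: algebra_simps)
  ultimately show ?case by (simp add: pow_coeff_Suc)
qed

lemma tendsto_exp_coeff_ratio:
  assumes db: "dominated b Cb" and lb: "(\<lambda>n. b n / a n) \<longlonglongrightarrow> 1" and b0: "b 0 = 0"
    and b_nonneg: "\<And>n. b n \<ge> 0"
  shows "(\<lambda>n. exp_coeff b n / a n) \<longlonglongrightarrow> exp (suminf b)"
proof -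
  obtain K where K: "\<And>m. dominated (pow_coeff b m) (K ^ m)" using dominated_pow_coeff[OF db b0] by blast
  define f where "f m n = pow_coeff b m n / a n / fact m" for m n
  have lim: "(\<lambda>n. f m n) \<longlonglongrightarrow> real m * suminf b ^ (m - 1) / fact m" for m
    unfolding f_def by (intro tendsto_divide tendsto_pow_coeff_ratio[OF assms] tendsto_const) auto
  have bound: "norm (f m n) \<le> K ^ m / fact m" for m n
  proof -
    have "norm (f m n) = \<bar>pow_coeff b m n / a n\<bar> / fact m" by (simp add: f_def abs_mult)
    also have "\<dots> \<le> K ^ m / fact m" by (intro divide_right_mono dominated_ratio_bound K) simp
    finally show ?thesis .
  qed
  have "summable (\<lambda>m. K ^ m / fact m)"
    using summable_exp[of K] by (simp add: divide_inverse_commute)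
  then have "(\<lambda>n. \<Sum>m. f m n) \<longlonglongrightarrow> (\<Sum>m. real m * suminf b ^ (m - 1) / fact m)"
    by (rule tendsto_suminf_dominated[OF lim bound])
  moreover have "(\<Sum>m. f m n) = exp_coeff b n / a n" for n
    by (subst suminf_finite[of "{..n}"])
      (auto simp: f_def pow_coeff_eq_0 b0 exp_coeff_def sum_divide_distrib mult.commute)
  moreover have "(\<Sum>m. real m * suminf b ^ (m - 1) / fact m) = exp (suminf b)"
    using sums_exp_deriv_series by (simp add: sums_iff)
  ultimately show ?thesis by simp
qed

end

section \<open>The limit laws\<close>

lemma tendsto_shift_ratio:
  fixes \<theta> :: "nat \<Rightarrow> real"
  assumes pos: "\<And>n. n \<ge> 1 \<Longrightarrow> \<theta> n > 0"
    and ratio: "(\<lambda>n. \<theta> (Suc n) / \<theta> n) \<longlonglongrightarrow> 1"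
  shows "(\<lambda>n. \<theta> (n - s) / \<theta> n) \<longlonglongrightarrow> 1"
proof (induction s)
  case 0
  have "eventually (\<lambda>n. \<theta> (n - 0) / \<theta> n = 1) sequentially"
    using eventually_ge_at_top[of 1] by eventually_elim (use pos in force)
  then show ?case by (rule tendsto_eventually)
next
  case (Suc s)
  have u: "(\<lambda>n. \<theta> (Suc (n - Suc s)) / \<theta> (n - Suc s)) \<longlonglongrightarrow> 1"
    by (rule LIMSEQ_diff_const_index[OF ratio])
  have "(\<lambda>n. inverse (\<theta> (Suc (n - Suc s)) / \<theta> (n - Suc s)) * (\<theta> (n - s) / \<theta> n)) \<longlonglongrightarrow> inverse 1 * 1"
    by (intro tendsto_mult tendsto_inverse u Suc.IH) auto
  moreover have "eventually (\<lambda>n. inverse (\<theta> (Suc (n - Suc s)) / \<theta> (n - Suc s)) * (\<theta> (n - s) / \<theta> n) = \<theta> (n - Suc s) / \<theta> n) sequentially"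
    using eventually_ge_at_top[of "Suc (Suc s)"]
  proof eventually_elim
    case (elim n)
    then have e: "Suc (n - Suc s) = n - s" by simp
    have "\<theta> (n - s) > 0" "\<theta> (n - Suc s) > 0" using pos elim by auto
    then show ?case unfolding e by (simp add: field_simps)
  qed
  ultimately show ?case by (simp add: tendsto_cong)
qed

lemma tendsto_real_shift_ratio: "(\<lambda>n. real n / real (n - s)) \<longlonglongrightarrow> 1"
proof -
  have "(\<lambda>n. inverse (1 - real s / real n)) \<longlonglongrightarrow> inverse (1 - 0)"
    by (intro tendsto_inverse tendsto_diff tendsto_const lim_const_over_n) auto
  moreover have "eventually (\<lambda>n. inverse (1 - real s / real n) = real n / real (n - s)) sequentially"
    using eventually_ge_at_top[of "Suc s"]
  proof eventually_elim
    case (elim n)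
    then have "real (n - s) = real n - real s" by simp
    then show ?case using elim by (simp add: field_simps)
  qed
  ultimately show ?thesis by (simp add: tendsto_cong)
qed

lemma le_const_of_ratio_bound:
  fixes \<theta> c :: "nat \<Rightarrow> real"
  assumes pos: "\<And>n. n \<ge> 1 \<Longrightarrow> \<theta> n > 0" and ratio: "(\<lambda>n. \<theta> (Suc n) / \<theta> n) \<longlonglongrightarrow> 1"
    and cbound: "\<And>n. 2 * j \<le> n \<Longrightarrow> \<theta> (n - j) * \<theta> j / \<theta> n < c j"
  shows "\<theta> j \<le> c j"
proof -
  have "(\<lambda>n. \<theta> j * (\<theta> (n - j) / \<theta> n)) \<longlonglongrightarrow> \<theta> j * 1"
    by (intro tendsto_mult tendsto_const tendsto_shift_ratio[OF pos ratio])
  moreover have "\<forall>n\<ge>2 * j. \<theta> j * (\<theta> (n - j) / \<theta> n) \<le> c j"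
    using cbound by (auto simp: mult_ac less_imp_le)
  ultimately show ?thesis using LIMSEQ_le_const2 by fastforce
qed

lemma conv_bound_over_index:
  fixes \<theta> c :: "nat \<Rightarrow> real"
  assumes pos: "\<And>n. n \<ge> 1 \<Longrightarrow> \<theta> n > 0" and j: "1 \<le> j" "2 * j \<le> n"
    and cbound: "\<theta> (n - j) * \<theta> j / \<theta> n < c j" and c: "\<theta> j \<le> c j"
  shows "\<theta> j / real j * (\<theta> (n - j) / real (n - j)) / (\<theta> n / real n) \<le> 2 * c j / real j"
proof -
  have p: "\<theta> j > 0" "\<theta> (n - j) > 0" "\<theta> n > 0" using pos j by auto
  have "real n \<le> 2 * real (n - j)" "real (n - j) > 0" using j by linarith+
  then have half: "real n / real (n - j) \<le> 2" by (simp add: divide_le_eq)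
  have "\<theta> j / real j * (\<theta> (n - j) / real (n - j)) / (\<theta> n / real n)
      = (\<theta> (n - j) * \<theta> j / \<theta> n) * (real n / real (n - j)) / real j"
    using p j by (simp add: field_simps)
  also have "\<dots> \<le> c j * 2 / real j"
    by (intro divide_right_mono mult_mono) (use cbound half p c in \<open>auto simp: less_imp_le\<close>)
  finally show ?thesis by (simp add: mult_ac)
qed

lemma tendsto_shift_ratio_over_index:
  fixes \<theta> :: "nat \<Rightarrow> real"
  assumes pos: "\<And>n. n \<ge> 1 \<Longrightarrow> \<theta> n > 0" and ratio: "(\<lambda>n. \<theta> (Suc n) / \<theta> n) \<longlonglongrightarrow> 1"
  shows "(\<lambda>n. \<theta> (n - s) / real (n - s) / (\<theta> n / real n)) \<longlonglongrightarrow> 1"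
proof -
  have "(\<lambda>n. (\<theta> (n - s) / \<theta> n) * (real n / real (n - s))) \<longlonglongrightarrow> 1 * 1"
    by (intro tendsto_mult tendsto_shift_ratio[OF pos ratio] tendsto_real_shift_ratio)
  moreover have "eventually (\<lambda>n. (\<theta> (n - s) / \<theta> n) * (real n / real (n - s)) =
      \<theta> (n - s) / real (n - s) / (\<theta> n / real n)) sequentially"
    using eventually_ge_at_top[of "Suc s"]
  proof eventually_elim
    case (elim n)
    have "\<theta> n > 0" "\<theta> (n - s) > 0" "real (n - s) > 0" using pos elim by auto
    then show ?case by (simp add: field_simps)
  qed
  ultimately show ?thesis by (simp add: Lim_transform_eventually)
qed

lemma subexp_seq_cycle_weights:
  fixes \<theta> c :: "nat \<Rightarrow> real"
  assumes pos: "\<And>n. n \<ge> 1 \<Longrightarrow> \<theta> n > 0"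
    and csum: "summable (\<lambda>j. c (Suc j) / real (Suc j))"
    and cbound: "\<And>n j. 1 \<le> j \<Longrightarrow> 2 * j \<le> n \<Longrightarrow> \<theta> (n - j) * \<theta> j / \<theta> n < c j"
    and ratio: "(\<lambda>n. \<theta> (Suc n) / \<theta> n) \<longlonglongrightarrow> 1"
  shows "subexp_seq (\<lambda>n. \<theta> n / real n) (\<lambda>j. 2 * c j / real j)"
proof
  have c: "\<theta> j \<le> c j" if "j \<ge> 1" for j
    by (rule le_const_of_ratio_bound[where \<theta> = \<theta> and c = c, OF pos ratio cbound[OF that]])
  have cs: "summable (\<lambda>j. c j / real j)"
    using csum by (subst summable_Suc_iff[symmetric]) simp
  then show "summable (\<lambda>j. 2 * c j / real j)" using summable_mult[OF cs, of 2] by simp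
  show "summable (\<lambda>n. \<theta> n / real n)"
    by (rule summable_comparison_test[OF _ cs])
      (use c pos in \<open>auto intro!: exI[of _ 1] divide_right_mono simp: less_imp_le\<close>)
  show "\<theta> j / real j * (\<theta> (n - j) / real (n - j)) / (\<theta> n / real n) \<le> 2 * c j / real j"
    if "1 \<le> j" "2 * j \<le> n" for j n
    by (rule conv_bound_over_index[where \<theta> = \<theta> and c = c, OF pos that cbound[OF that] c[OF that(1)]])
qed (use pos tendsto_shift_ratio_over_index[OF pos ratio] in simp_all)

locale cycle_weights = subexp_seq a d for a d :: "nat \<Rightarrow> real" +
  fixes \<theta> :: "nat \<Rightarrow> real"
  assumes a_eq: "a = (\<lambda>n. \<theta> n / real n)"
begin

lemma theta_eq: "n \<ge> 1 \<Longrightarrow> \<theta> n = real n * a n"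
  by (simp add: a_eq)

lemma a_nonneg: "a n \<ge> 0"
  using a_pos[of n] a_0 by (cases "n = 0") auto

lemma hseq_eq: "hseq \<theta> n = exp_coeff a n"
  by (simp add: a_eq hseq_eq_exp_coeff)

lemma theta_pos: "n \<ge> 1 \<Longrightarrow> \<theta> n > 0"
  using a_pos[of n] by (simp add: a_eq zero_less_divide_iff)

lemma hseq_theta_pos: "hseq \<theta> n > 0"
  by (rule hseq_pos[OF theta_pos])

lemma hseq_sums: "hseq \<theta> sums exp (suminf a)"
  using exp_coeff_sums[OF a_nonneg summable_a a_0] by (simp add: hseq_eq[abs_def])

lemma tendsto_a_over_hseq: "(\<lambda>n. a n / hseq \<theta> n) \<longlonglongrightarrow> inverse (exp (suminf a))"
  using tendsto_inverse[OF tendsto_exp_coeff_ratio[OF dominated_self tendsto_ratio_self a_0 a_nonneg]]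
  by (simp add: hseq_eq)

lemma tendsto_Pn_L1: "(\<lambda>n. Pn \<theta> n (\<lambda>\<sigma>. L1 \<sigma> + m = n)) \<longlonglongrightarrow> hseq \<theta> m / (\<Sum>j. hseq \<theta> j)"
proof -
  have "(\<lambda>n. hseq \<theta> m * (a (n - m) / a n) * inverse (real n / real (n - m)) * (a n / hseq \<theta> n))
      \<longlonglongrightarrow> hseq \<theta> m * 1 * inverse 1 * inverse (exp (suminf a))"
    by (intro tendsto_mult tendsto_inverse tendsto_const a_shift_ratio tendsto_real_shift_ratio
        tendsto_a_over_hseq) simp
  moreover have "eventually (\<lambda>n. hseq \<theta> m * (a (n - m) / a n) * inverse (real n / real (n - m)) *
      (a n / hseq \<theta> n) = Pn \<theta> n (\<lambda>\<sigma>. L1 \<sigma> + m = n)) sequentially"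
    using eventually_gt_at_top[of m]
  proof eventually_elim
    case (elim n)
    have "Pn \<theta> n (\<lambda>\<sigma>. L1 \<sigma> + m = n) = real (n - m) * a (n - m) * hseq \<theta> m / (real n * hseq \<theta> n)"
      using Pn_L1_eq[OF elim, of \<theta>] theta_eq[of "n - m"] elim by simp
    moreover have "hseq \<theta> m * (a (n - m) / a n) * inverse (real n / real (n - m)) * (a n / hseq \<theta> n) =
        real (n - m) * a (n - m) * hseq \<theta> m / (real n * hseq \<theta> n)"
      using a_pos[of n] hseq_theta_pos[of n] elim by (simp add: field_simps)
    ultimately show ?case by simp
  qed
  ultimately show ?thesis
    using hseq_sums by (simp add: Lim_transform_eventually sums_iff divide_inverse)
qed

lemma tendsto_Pn_Rcyc:
  "(\<lambda>n. Pn \<theta> n (\<lambda>\<sigma>. \<forall>j\<in>{1..k}. Rcyc n j \<sigma> = r j)) \<longlonglongrightarrow> (\<Prod>j=1..k. poisson (a j) (r j))"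
proof -
  define s where "s = weighted_count k r"
  define b where "b = seq_tail k a"
  have b_nonneg: "b n \<ge> 0" for n using a_nonneg by (simp add: b_def seq_tail_def)
  have db: "dominated b 1" unfolding dominated_def b_def seq_tail_def using a_nonneg by auto
  have lb: "(\<lambda>n. b n / a n) \<longlonglongrightarrow> 1"
  proof (rule tendsto_eventually)
    show "\<forall>\<^sub>F n in sequentially. b n / a n = 1"
      using eventually_gt_at_top[of k]
    proof eventually_elim
      case (elim n)
      then have "a n > 0" using a_pos by simp
      then show ?case using elim by (simp add: b_def seq_tail_def)
    qed
  qed
  have "suminf b = suminf a - (\<Sum>j=1..k. a j)"
    using seq_tail_sums[OF summable_a, of k] a_0 by (simp add: b_def sums_iff atMost_atLeast0 sum.atLeast_Suc_atMost)
  moreover have "b 0 = 0" by (simp add: b_def seq_tail_def)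
  ultimately have "(\<lambda>n. exp_coeff b (n - s) / a (n - s)) \<longlonglongrightarrow> exp (suminf a - (\<Sum>j=1..k. a j))"
    using LIMSEQ_diff_const_index[OF tendsto_exp_coeff_ratio[OF db lb _ b_nonneg]] by simp
  then have "(\<lambda>n. poisson_weight a k r * (exp_coeff b (n - s) / a (n - s)) * (a (n - s) / a n) * (a n / hseq \<theta> n))
      \<longlonglongrightarrow> poisson_weight a k r * exp (suminf a - (\<Sum>j=1..k. a j)) * 1 * inverse (exp (suminf a))"
    by (intro tendsto_mult tendsto_const a_shift_ratio tendsto_a_over_hseq)
  moreover have "eventually (\<lambda>n. poisson_weight a k r * (exp_coeff b (n - s) / a (n - s)) * (a (n - s) / a n) *
      (a n / hseq \<theta> n) = Pn \<theta> n (\<lambda>\<sigma>. \<forall>j\<in>{1..k}. Rcyc n j \<sigma> = r j)) sequentially"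
    using eventually_gt_at_top[of s]
  proof eventually_elim
    case (elim n)
    have "Pn \<theta> n (\<lambda>\<sigma>. \<forall>j\<in>{1..k}. Rcyc n j \<sigma> = r j) =
        poisson_weight a k r * seq_shift s (exp_coeff b) n / hseq \<theta> n"
      unfolding a_eq s_def b_def by (rule Pn_Rcyc_eq)
    moreover have "a n > 0" "a (n - s) > 0" using a_pos elim by auto
    ultimately show ?case using elim by (simp add: seq_shift_def)
  qed
  moreover have "poisson_weight a k r * exp (suminf a - (\<Sum>j=1..k. a j)) * 1 * inverse (exp (suminf a)) =
      (\<Prod>j=1..k. poisson (a j) (r j))"
    using poisson_weight_exp[of a k r] by (simp add: exp_diff exp_minus field_simps)
  ultimately show ?thesis by (simp add: Lim_transform_eventually)
qed

lemma tendsto_Pn_Kcyc: "(\<lambda>n. Pn \<theta> n (\<lambda>\<sigma>. Kcyc n \<sigma> = Suc k)) \<longlonglongrightarrow> poisson (suminf a) k"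
proof -
  have "(\<lambda>n. (pow_coeff a (Suc k) n / a n) * (a n / hseq \<theta> n) / fact (Suc k))
      \<longlonglongrightarrow> (real (Suc k) * suminf a ^ k) * inverse (exp (suminf a)) / fact (Suc k)"
    using tendsto_pow_coeff_ratio[OF dominated_self tendsto_ratio_self a_0 a_nonneg, of "Suc k"]
    by (intro tendsto_mult tendsto_divide tendsto_const tendsto_a_over_hseq) auto
  moreover have "eventually (\<lambda>n. (pow_coeff a (Suc k) n / a n) * (a n / hseq \<theta> n) / fact (Suc k) =
      Pn \<theta> n (\<lambda>\<sigma>. Kcyc n \<sigma> = Suc k)) sequentially"
    using eventually_ge_at_top[of 1]
  proof eventually_elim
    case (elim n)
    then show ?case using a_pos[of n] hseq_theta_pos[of n]
      by (simp add: Pn_Kcyc_eq a_eq[symmetric] field_simps del: fact_Suc)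
  qed
  moreover have "(real (Suc k) * suminf a ^ k) * inverse (exp (suminf a)) / fact (Suc k) = poisson (suminf a) k"
    by (simp add: poisson_def exp_minus field_simps del: of_nat_Suc)
  ultimately show ?thesis by (simp add: Lim_transform_eventually)
qed

end

theorem theorem7p1:
  fixes \<theta> c :: "nat \<Rightarrow> real"
  assumes pos: "\<And>n. n \<ge> 1 \<Longrightarrow> \<theta> n > 0"
    and csum: "summable (\<lambda>j. c (Suc j) / real (Suc j))"
    and cbound: "\<And>n j. 1 \<le> j \<Longrightarrow> 2 * j \<le> n \<Longrightarrow> \<theta> (n - j) * \<theta> j / \<theta> n < c j"
    and ratio: "(\<lambda>n. \<theta> (Suc n) / \<theta> n) \<longlonglongrightarrow> 1"
  shows "summable (hseq \<theta>)
    \<and> (\<forall>m. (\<lambda>n. Pn \<theta> n (\<lambda>\<sigma>. L1 \<sigma> + m = n)) \<longlonglongrightarrow> hseq \<theta> m / (\<Sum>j. hseq \<theta> j))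
    \<and> (\<forall>k (r :: nat \<Rightarrow> nat).
         (\<lambda>n. Pn \<theta> n (\<lambda>\<sigma>. \<forall>j\<in>{1..k}. Rcyc n j \<sigma> = r j))
           \<longlonglongrightarrow> (\<Prod>j\<in>{1..k}. poisson (\<theta> j / real j) (r j)))
    \<and> summable (\<lambda>j. \<theta> (Suc j) / real (Suc j))
    \<and> (\<forall>k. (\<lambda>n. Pn \<theta> n (\<lambda>\<sigma>. Kcyc n \<sigma> = Suc k))
           \<longlonglongrightarrow> poisson (\<Sum>j. \<theta> (Suc j) / real (Suc j)) k)"
proof -
  interpret cycle_weights "\<lambda>n. \<theta> n / real n" "\<lambda>j. 2 * c j / real j" \<theta>
    unfolding cycle_weights_def cycle_weights_axioms_def
    using subexp_seq_cycle_weights[OF pos csum cbound ratio] by simp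
  have "summable (\<lambda>j. \<theta> (Suc j) / real (Suc j))"
    using summable_a by (subst summable_Suc_iff[of "\<lambda>j. \<theta> j / real j"])
  moreover have "(\<Sum>j. \<theta> (Suc j) / real (Suc j)) = (\<Sum>j. \<theta> j / real j)"
    using suminf_split_head[OF summable_a] by simp
  ultimately show ?thesis
    using sums_summable[OF hseq_sums] tendsto_Pn_L1 tendsto_Pn_Rcyc tendsto_Pn_Kcyc by auto
qed

end
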